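(* Let $C,D,E$ be category presentations and $P:C\nrightarrow D$, $Q:D\nrightarrow E$ curried profunctor presentations. There is an isomorphism of profunctors $\mu^{P,Q}:[\![P]\!]\odot[\![Q]\!]\to[\![P\circledast Q]\!]$ in $\mathbf{Prof}([\![C]\!],[\![E]\!])$, given on components by $\langle[s],[t]\rangle\mapsto[s\otimes t]$ for terms $s:d$ of $P(c)$ and $t:e$ of $Q(d)$, which is natural in $P\in\mathbf{Curr}(C,D)$ and $Q\in\mathbf{Curr}(D,E)$. Furthermore, if $P$ and $Q$ are finite then $P\circledast Q$ is finite. In particular, if $\mathcal P:[\![C]\!]\nrightarrow[\![D]\!]$ and $\mathcal Q:[\![D]\!]\nrightarrow[\![E]\!]$ are finitely curried presentable, then so is $\mathcal P\odot\mathcal Q$.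
   Context: Category presentations $C$: sorts, function symbols $f:c\to c'$, equations $C_E$ between parallel paths (paths: composable lists $f_1.\cdots.f_n$ or empty $1_c$); finite if all these sets are finite. $\approx_C$: smallest equivalence relation on paths containing $C_E$ closed under concatenation with composable function symbols. $[\![C]\!]$: objects the sorts, morphisms $\approx_C$-classes $[p]$. Profunctors: $\mathcal P:\mathcal C\nrightarrow\mathcal D$ is a functor $\mathcal C^{op}\times\mathcal D\to\mathbf{Set}$ (equivalently a category over $\mathbf 2=\{0\to1\}$ with fibres $\mathcal C,\mathcal D$); $\mathbf{Prof}(\mathcal C,\mathcal D)$ has natural transformations as morphisms. Composition: $(\mathcal P\odot\mathcal Q)(c,e)$ is $\coprod_{d}\mathcal P(c,d)\times\mathcal Q(d,e)$ modulo the equivalence relation generated by $(p,\mathcal Q(g,1)(q'))\sim(\mathcal P(1,g)(p),q')$ for $g:d\to d'$ in $\mathcal D$, $p\in\mathcal P(c,d)$, $q'\in\mathcal Q(d',e)$; the class of $(p,q)$ is $\langle p,q\rangle$; $(\mathcal P\odot\mathcal Q)(f,h)\langle p,q\rangle=\langle\mathcal P(f,1)p,\mathcal Q(1,h)q\rangle$. Instance presentations: a $D$-instance presentation $I$ has generators $x:d$ and equations $I_E$ between terms $x.g$ ($g$ a $D$-path); finite if generators and equations are finite. $\approx_I$: smallest equivalence relation on terms containing $I_E$, closed under right concatenation with $D$-function symbols, identifying $t.p$ and $t.q$ for every equation $p=q$ of $D_E$. $[\![I]\!]:[\![D]\!]\to\mathbf{Set}$ sends $d$ to $\approx_I$-classes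 of terms of type $d$, $[g]$ acting by $[t]\mapsto[t.g]$. A morphism $F:I\to J$ sends generators $x:d$ to terms $F(x):d$ with $F(x).g\approx_J F(y).h$ for every equation $x.g=y.h$ in $I_E$; $F(x.g):=F(x).g$; $F\approx G$ iff $F(x)\approx_J G(x)$ for all $x$. Curried presentations: $P:C\nrightarrow D$ assigns a $D$-instance presentation $P(c)$ to each sort $c$ and a $D$-instance morphism $P(f):P(c')\to P(c)$ to each function symbol $f:c\to c'$, with $P(p)\approx P(p')$ for each equation $p=p'$ of $C_E$, where $P(f_1.\cdots.f_n):=P(f_n)\circ\cdots\circ P(f_1)$. Finite if $C,D$ and all $P(c)$ are finite. Morphisms $F:P\to P'$: families of $D$-instance morphisms $F_c:P(c)\to P'(c)$ with $F_c\circ P(f)\approx P'(f)\circ F_{c'}$ for each function symbol $f:c\to c'$; category $\mathbf{Curr}(C,D)$. Semantics: $[\![P]\!](c,d)=[\![P(c)]\!](d)$, with $[f]$ acting by $[t]\mapsto[P(f)(t)]$ and $[g]$ by $[t]\mapsto[t.g]$; on morphisms $[\![F]\!]_{(c,d)}[t]=[F_c(t)]$. A profunctor is finitely curried presentable if it is isomorphic to $[\![P]\!]$ for a finite curried $P$. Composite: for $P:C\nrightarrow D$, $Q:D\nrightarrow E$ and sort $c$, $(P\circledast Q)(c)$ is the $E$-instance presentation with generators $p\otimes q:e$ ($p:d$ generator of $P(c)$, $q:e$ generator of $Q(d)$); $\otimes$ extends to terms by $p\otimes(q.h):=(p\otimes q).h$ and $(p.g)\otimes t:=p\otimes Q(g)(t)$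 ($p:d'$, $g:d'\to d$); equations: $s\otimes q=s'\otimes q$ for each equation $s=s':d$ of $P(c)$ and generator $q:e$ of $Q(d)$, and $p\otimes t=p\otimes t'$ for each generator $p:d$ of $P(c)$ and equation $t=t'$ of $Q(d)$. $(P\circledast Q)(f)(p\otimes q):=P(f)(p)\otimes q$. On morphisms, $(\phi\circledast\psi)_c(p\otimes q):=\phi_c(p)\otimes\psi_d(q)$. *)

theory Defs
  imports Main
begin

record ('o,'m) cat =
  c_obj :: "'o set"
  c_mor :: "'m set"
  c_dom :: "'m \<Rightarrow> 'o"
  c_cod :: "'m \<Rightarrow> 'o"
  c_id  :: "'o \<Rightarrow> 'm"
  c_comp :: "'m \<Rightarrow> 'm \<Rightarrow> 'm"   (* c_comp g f = g \<circ> f, f applied first *)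

text \<open>A profunctor P : A -/-> B is a functor A^op x B -> Set.  A morphism (f,g) of
  A^op x B goes from (cod f, dom g) to (dom f, cod g).\<close>
record ('o1,'m1,'o2,'m2,'v) prof =
  pobj :: "'o1 \<Rightarrow> 'o2 \<Rightarrow> 'v set"
  pmor :: "'m1 \<Rightarrow> 'm2 \<Rightarrow> 'v \<Rightarrow> 'v"

definition is_prof :: "('o1,'m1) cat \<Rightarrow> ('o2,'m2) cat \<Rightarrow> ('o1,'m1,'o2,'m2,'v) prof \<Rightarrow> bool" where
  "is_prof A B P \<longleftrightarrow>
     (\<forall>f\<in>c_mor A. \<forall>g\<in>c_mor B. \<forall>x\<in>pobj P (c_cod A f) (c_dom B g).
        pmor P f g x \<in> pobj P (c_dom A f) (c_cod B g)) \<and>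
     (\<forall>a\<in>c_obj A. \<forall>b\<in>c_obj B. \<forall>x\<in>pobj P a b. pmor P (c_id A a) (c_id B b) x = x) \<and>
     (\<forall>f\<in>c_mor A. \<forall>f'\<in>c_mor A. \<forall>g\<in>c_mor B. \<forall>g'\<in>c_mor B.
        c_cod A f' = c_dom A f \<longrightarrow> c_cod B g = c_dom B g' \<longrightarrow>
        (\<forall>x\<in>pobj P (c_cod A f) (c_dom B g).
           pmor P (c_comp A f f') (c_comp B g' g) x = pmor P f' g' (pmor P f g x)))"

definition is_nt :: "('o1,'m1) cat \<Rightarrow> ('o2,'m2) cat \<Rightarrow> ('o1,'m1,'o2,'m2,'v) prof
    \<Rightarrow> ('o1,'m1,'o2,'m2,'w) prof \<Rightarrow> ('o1 \<Rightarrow> 'o2 \<Rightarrow> 'v \<Rightarrow> 'w) \<Rightarrow> bool" where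
  "is_nt A B P P' \<alpha> \<longleftrightarrow>
     (\<forall>a\<in>c_obj A. \<forall>b\<in>c_obj B. \<forall>x\<in>pobj P a b. \<alpha> a b x \<in> pobj P' a b) \<and>
     (\<forall>f\<in>c_mor A. \<forall>g\<in>c_mor B. \<forall>x\<in>pobj P (c_cod A f) (c_dom B g).
        \<alpha> (c_dom A f) (c_cod B g) (pmor P f g x) = pmor P' f g (\<alpha> (c_cod A f) (c_dom B g) x))"

definition is_prof_iso :: "('o1,'m1) cat \<Rightarrow> ('o2,'m2) cat \<Rightarrow> ('o1,'m1,'o2,'m2,'v) prof
    \<Rightarrow> ('o1,'m1,'o2,'m2,'w) prof \<Rightarrow> ('o1 \<Rightarrow> 'o2 \<Rightarrow> 'v \<Rightarrow> 'w) \<Rightarrow> bool" where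
  "is_prof_iso A B P P' \<alpha> \<longleftrightarrow> is_nt A B P P' \<alpha> \<and>
     (\<exists>\<beta>. is_nt A B P' P \<beta> \<and>
        (\<forall>a\<in>c_obj A. \<forall>b\<in>c_obj B.
           (\<forall>x\<in>pobj P a b. \<beta> a b (\<alpha> a b x) = x) \<and> (\<forall>y\<in>pobj P' a b. \<alpha> a b (\<beta> a b y) = y)))"

definition prof_isomorphic :: "('o1,'m1) cat \<Rightarrow> ('o2,'m2) cat \<Rightarrow> ('o1,'m1,'o2,'m2,'v) prof
    \<Rightarrow> ('o1,'m1,'o2,'m2,'w) prof \<Rightarrow> bool" where
  "prof_isomorphic A B P P' \<longleftrightarrow> (\<exists>\<alpha>. is_prof_iso A B P P' \<alpha>)"

definition coend_carrier :: "('o2,'m2) cat \<Rightarrow> ('o1,'m1,'o2,'m2,'v) prof \<Rightarrow> ('o2,'m2,'o3,'m3,'w) prof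
    \<Rightarrow> 'o1 \<Rightarrow> 'o3 \<Rightarrow> ('o2 \<times> 'v \<times> 'w) set" where
  "coend_carrier B P Q a c = {(b,p,q). b \<in> c_obj B \<and> p \<in> pobj P a b \<and> q \<in> pobj Q b c}"

text \<open>Generating relation: (p, Q(g,1) q') ~ (P(1,g) p, q') for g : b -> b'.\<close>
definition coend_gen :: "('o1,'m1) cat \<Rightarrow> ('o2,'m2) cat \<Rightarrow> ('o3,'m3) cat
    \<Rightarrow> ('o1,'m1,'o2,'m2,'v) prof \<Rightarrow> ('o2,'m2,'o3,'m3,'w) prof
    \<Rightarrow> 'o1 \<Rightarrow> 'o3 \<Rightarrow> 'o2 \<times> 'v \<times> 'w \<Rightarrow> 'o2 \<times> 'v \<times> 'w \<Rightarrow> bool" where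
  "coend_gen A B C P Q a c u v \<longleftrightarrow>
     (\<exists>g\<in>c_mor B. \<exists>p\<in>pobj P a (c_dom B g). \<exists>q\<in>pobj Q (c_cod B g) c.
        u = (c_dom B g, p, pmor Q g (c_id C c) q) \<and>
        v = (c_cod B g, pmor P (c_id A a) g p, q))"

definition coend_class :: "('o1,'m1) cat \<Rightarrow> ('o2,'m2) cat \<Rightarrow> ('o3,'m3) cat
    \<Rightarrow> ('o1,'m1,'o2,'m2,'v) prof \<Rightarrow> ('o2,'m2,'o3,'m3,'w) prof
    \<Rightarrow> 'o1 \<Rightarrow> 'o3 \<Rightarrow> 'o2 \<times> 'v \<times> 'w \<Rightarrow> ('o2 \<times> 'v \<times> 'w) set" where
  "coend_class A B C P Q a c u =
     {v \<in> coend_carrier B P Q a c. equivclp (coend_gen A B C P Q a c) u v}"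

definition rep :: "'a set \<Rightarrow> 'a" where
  "rep X = (SOME x. x \<in> X)"

definition prof_comp :: "('o1,'m1) cat \<Rightarrow> ('o2,'m2) cat \<Rightarrow> ('o3,'m3) cat
    \<Rightarrow> ('o1,'m1,'o2,'m2,'v) prof \<Rightarrow> ('o2,'m2,'o3,'m3,'w) prof
    \<Rightarrow> ('o1,'m1,'o3,'m3,('o2 \<times> 'v \<times> 'w) set) prof" where
  "prof_comp A B C P Q =
     \<lparr> pobj = (\<lambda>a c. coend_class A B C P Q a c ` coend_carrier B P Q a c),
       pmor = (\<lambda>f h X. (case rep X of (b,p,q) \<Rightarrow>
                 coend_class A B C P Q (c_dom A f) (c_cod C h)
                   (b, pmor P f (c_id B b) p, pmor Q (c_id B b) h q))) \<rparr>"

definition prof_comp_nt :: "('o1,'m1) cat \<Rightarrow> ('o2,'m2) cat \<Rightarrow> ('o3,'m3) cat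
    \<Rightarrow> ('o1,'m1,'o2,'m2,'v') prof \<Rightarrow> ('o2,'m2,'o3,'m3,'w') prof
    \<Rightarrow> ('o1 \<Rightarrow> 'o2 \<Rightarrow> 'v \<Rightarrow> 'v') \<Rightarrow> ('o2 \<Rightarrow> 'o3 \<Rightarrow> 'w \<Rightarrow> 'w')
    \<Rightarrow> 'o1 \<Rightarrow> 'o3 \<Rightarrow> ('o2 \<times> 'v \<times> 'w) set \<Rightarrow> ('o2 \<times> 'v' \<times> 'w') set" where
  "prof_comp_nt A B C P' Q' \<alpha> \<beta> a c X =
     (case rep X of (b,p,q) \<Rightarrow> coend_class A B C P' Q' a c (b, \<alpha> a b p, \<beta> b c q))"

record ('s,'f) catpres =
  sorts :: "'s set"
  syms  :: "'f set"
  sdom  :: "'f \<Rightarrow> 's"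
  scod  :: "'f \<Rightarrow> 's"
  ceqs  :: "(('s \<times> 'f list) \<times> ('s \<times> 'f list)) set"

text \<open>A path is (c, [f1,...,fn]) with source c, composed diagrammatically f1.f2...fn;
  (c, []) is the empty path 1_c.\<close>
fun path_ok :: "('s,'f) catpres \<Rightarrow> 's \<Rightarrow> 'f list \<Rightarrow> bool" where
  "path_ok C c [] = True"
| "path_ok C c (f # fs) = (f \<in> syms C \<and> sdom C f = c \<and> path_ok C (scod C f) fs)"

definition valid_path :: "('s,'f) catpres \<Rightarrow> 's \<times> 'f list \<Rightarrow> bool" where
  "valid_path C p \<longleftrightarrow> fst p \<in> sorts C \<and> path_ok C (fst p) (snd p)"

definition ptgt :: "('s,'f) catpres \<Rightarrow> 's \<times> 'f list \<Rightarrow> 's" where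
  "ptgt C p = (if snd p = [] then fst p else scod C (last (snd p)))"

definition wf_catpres :: "('s,'f) catpres \<Rightarrow> bool" where
  "wf_catpres C \<longleftrightarrow> (\<forall>f\<in>syms C. sdom C f \<in> sorts C \<and> scod C f \<in> sorts C) \<and>
     (\<forall>(p,q)\<in>ceqs C. valid_path C p \<and> valid_path C q \<and> fst p = fst q \<and> ptgt C p = ptgt C q)"

definition finite_catpres :: "('s,'f) catpres \<Rightarrow> bool" where
  "finite_catpres C \<longleftrightarrow> finite (sorts C) \<and> finite (syms C) \<and> finite (ceqs C)"

inductive peq :: "('s,'f) catpres \<Rightarrow> 's \<times> 'f list \<Rightarrow> 's \<times> 'f list \<Rightarrow> bool" for C where
  peq_eq: "(p,q) \<in> ceqs C \<Longrightarrow> peq C p q"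
| peq_refl: "valid_path C p \<Longrightarrow> peq C p p"
| peq_sym: "peq C p q \<Longrightarrow> peq C q p"
| peq_trans: "peq C p q \<Longrightarrow> peq C q r \<Longrightarrow> peq C p r"
| peq_right: "peq C p q \<Longrightarrow> f \<in> syms C \<Longrightarrow> sdom C f = ptgt C p \<Longrightarrow>
     peq C (fst p, snd p @ [f]) (fst q, snd q @ [f])"
| peq_left: "peq C p q \<Longrightarrow> f \<in> syms C \<Longrightarrow> scod C f = fst p \<Longrightarrow>
     peq C (sdom C f, f # snd p) (sdom C f, f # snd q)"

definition pclass :: "('s,'f) catpres \<Rightarrow> 's \<times> 'f list \<Rightarrow> ('s \<times> 'f list) set" where
  "pclass C p = {q. peq C p q}"

definition sem_cat :: "('s,'f) catpres \<Rightarrow> ('s, ('s \<times> 'f list) set) cat" where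
  "sem_cat C = \<lparr> c_obj = sorts C,
     c_mor = {pclass C p | p. valid_path C p},
     c_dom = (\<lambda>X. fst (rep X)),
     c_cod = (\<lambda>X. ptgt C (rep X)),
     c_id = (\<lambda>c. pclass C (c, [])),
     c_comp = (\<lambda>Y X. pclass C (fst (rep X), snd (rep X) @ snd (rep Y))) \<rparr>"

record ('x,'s,'f) inspres =
  gens  :: "'x set"
  gsort :: "'x \<Rightarrow> 's"
  ieqs  :: "(('x \<times> 'f list) \<times> ('x \<times> 'f list)) set"

text \<open>A term x.g is the pair (x, g) with g a D-path starting at the sort of x.\<close>
definition valid_term :: "('s,'f) catpres \<Rightarrow> ('x,'s,'f) inspres \<Rightarrow> 'x \<times> 'f list \<Rightarrow> bool" where
  "valid_term D I t \<longleftrightarrow> fst t \<in> gens I \<and> valid_path D (gsort I (fst t), snd t)"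

definition ttype :: "('s,'f) catpres \<Rightarrow> ('x,'s,'f) inspres \<Rightarrow> 'x \<times> 'f list \<Rightarrow> 's" where
  "ttype D I t = ptgt D (gsort I (fst t), snd t)"

definition wf_inspres :: "('s,'f) catpres \<Rightarrow> ('x,'s,'f) inspres \<Rightarrow> bool" where
  "wf_inspres D I \<longleftrightarrow> (\<forall>x\<in>gens I. gsort I x \<in> sorts D) \<and>
     (\<forall>(s,t)\<in>ieqs I. valid_term D I s \<and> valid_term D I t \<and> ttype D I s = ttype D I t)"

definition finite_inspres :: "('x,'s,'f) inspres \<Rightarrow> bool" where
  "finite_inspres I \<longleftrightarrow> finite (gens I) \<and> finite (ieqs I)"

inductive teq :: "('s,'f) catpres \<Rightarrow> ('x,'s,'f) inspres \<Rightarrow> 'x \<times> 'f list \<Rightarrow> 'x \<times> 'f list \<Rightarrow> bool"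
  for D I where
  teq_eq: "(s,t) \<in> ieqs I \<Longrightarrow> teq D I s t"
| teq_refl: "valid_term D I t \<Longrightarrow> teq D I t t"
| teq_sym: "teq D I s t \<Longrightarrow> teq D I t s"
| teq_trans: "teq D I s t \<Longrightarrow> teq D I t u \<Longrightarrow> teq D I s u"
| teq_right: "teq D I s t \<Longrightarrow> f \<in> syms D \<Longrightarrow> sdom D f = ttype D I s \<Longrightarrow>
     teq D I (fst s, snd s @ [f]) (fst t, snd t @ [f])"
| teq_ceq: "valid_term D I t \<Longrightarrow> (p,q) \<in> ceqs D \<Longrightarrow> fst p = ttype D I t \<Longrightarrow>
     teq D I (fst t, snd t @ snd p) (fst t, snd t @ snd q)"

definition tclass :: "('s,'f) catpres \<Rightarrow> ('x,'s,'f) inspres \<Rightarrow> 'x \<times> 'f list \<Rightarrow> ('x \<times> 'f list) set" where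
  "tclass D I t = {u. teq D I t u}"

definition tapp :: "('x \<Rightarrow> 'y \<times> 'f list) \<Rightarrow> 'x \<times> 'f list \<Rightarrow> 'y \<times> 'f list" where
  "tapp F t = (fst (F (fst t)), snd (F (fst t)) @ snd t)"

definition inst_morph :: "('s,'f) catpres \<Rightarrow> ('x,'s,'f) inspres \<Rightarrow> ('y,'s,'f) inspres
    \<Rightarrow> ('x \<Rightarrow> 'y \<times> 'f list) \<Rightarrow> bool" where
  "inst_morph D I J F \<longleftrightarrow>
     (\<forall>x\<in>gens I. valid_term D J (F x) \<and> ttype D J (F x) = gsort I x) \<and>
     (\<forall>(s,t)\<in>ieqs I. teq D J (tapp F s) (tapp F t))"

definition morph_eq :: "('s,'f) catpres \<Rightarrow> ('x,'s,'f) inspres \<Rightarrow> ('y,'s,'f) inspres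
    \<Rightarrow> ('x \<Rightarrow> 'y \<times> 'f list) \<Rightarrow> ('x \<Rightarrow> 'y \<times> 'f list) \<Rightarrow> bool" where
  "morph_eq D I J F G \<longleftrightarrow> (\<forall>x\<in>gens I. teq D J (F x) (G x))"

definition mcomp :: "('y \<Rightarrow> 'z \<times> 'f list) \<Rightarrow> ('x \<Rightarrow> 'y \<times> 'f list) \<Rightarrow> 'x \<Rightarrow> 'z \<times> 'f list" where
  "mcomp G F x = tapp G (F x)"

record ('c,'f,'x,'d,'g) curr =
  cinst :: "'c \<Rightarrow> ('x,'d,'g) inspres"
  cmor  :: "'f \<Rightarrow> 'x \<Rightarrow> 'x \<times> 'g list"

text \<open>Action of P on a C-path f1...fn : c0 -> cn, a morphism P(cn) -> P(c0), applied to a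
  term of P(cn): P(fn) is applied first, P(f1) last.\<close>
definition apply_path :: "('c,'f,'x,'d,'g) curr \<Rightarrow> 'f list \<Rightarrow> 'x \<times> 'g list \<Rightarrow> 'x \<times> 'g list" where
  "apply_path P fs t = foldr (\<lambda>f u. tapp (cmor P f) u) fs t"

definition curr_pres :: "('c,'f) catpres \<Rightarrow> ('d,'g) catpres \<Rightarrow> ('c,'f,'x,'d,'g) curr \<Rightarrow> bool" where
  "curr_pres C D P \<longleftrightarrow> wf_catpres C \<and> wf_catpres D \<and>
     (\<forall>c\<in>sorts C. wf_inspres D (cinst P c)) \<and>
     (\<forall>f\<in>syms C. inst_morph D (cinst P (scod C f)) (cinst P (sdom C f)) (cmor P f)) \<and>
     (\<forall>(p,p')\<in>ceqs C. morph_eq D (cinst P (ptgt C p)) (cinst P (fst p))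
         (\<lambda>x. apply_path P (snd p) (x, [])) (\<lambda>x. apply_path P (snd p') (x, [])))"

definition finite_curr :: "('c,'f) catpres \<Rightarrow> ('d,'g) catpres \<Rightarrow> ('c,'f,'x,'d,'g) curr \<Rightarrow> bool" where
  "finite_curr C D P \<longleftrightarrow> finite_catpres C \<and> finite_catpres D \<and>
     (\<forall>c\<in>sorts C. finite_inspres (cinst P c))"

definition curr_morph :: "('c,'f) catpres \<Rightarrow> ('d,'g) catpres \<Rightarrow> ('c,'f,'x,'d,'g) curr
    \<Rightarrow> ('c,'f,'y,'d,'g) curr \<Rightarrow> ('c \<Rightarrow> 'x \<Rightarrow> 'y \<times> 'g list) \<Rightarrow> bool" where
  "curr_morph C D P P' F \<longleftrightarrow>
     (\<forall>c\<in>sorts C. inst_morph D (cinst P c) (cinst P' c) (F c)) \<and>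
     (\<forall>f\<in>syms C. morph_eq D (cinst P (scod C f)) (cinst P' (sdom C f))
        (mcomp (F (sdom C f)) (cmor P f)) (mcomp (cmor P' f) (F (scod C f))))"

definition sem_curr :: "('c,'f) catpres \<Rightarrow> ('d,'g) catpres \<Rightarrow> ('c,'f,'x,'d,'g) curr
    \<Rightarrow> ('c, ('c \<times> 'f list) set, 'd, ('d \<times> 'g list) set, ('x \<times> 'g list) set) prof" where
  "sem_curr C D P = \<lparr>
     pobj = (\<lambda>c d. {tclass D (cinst P c) t | t. valid_term D (cinst P c) t \<and> ttype D (cinst P c) t = d}),
     pmor = (\<lambda>X Y T. (let p = rep X; q = rep Y; u = apply_path P (snd p) (rep T)
                      in tclass D (cinst P (fst p)) (fst u, snd u @ snd q))) \<rparr>"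

definition sem_curr_morph :: "('d,'g) catpres \<Rightarrow> ('c,'f,'y,'d,'g) curr \<Rightarrow> ('c \<Rightarrow> 'x \<Rightarrow> 'y \<times> 'g list)
    \<Rightarrow> 'c \<Rightarrow> 'd \<Rightarrow> ('x \<times> 'g list) set \<Rightarrow> ('y \<times> 'g list) set" where
  "sem_curr_morph D P' F c d T = tclass D (cinst P' c) (tapp (F c) (rep T))"

definition fcp :: "'x itself \<Rightarrow> ('c,'f) catpres \<Rightarrow> ('d,'g) catpres
    \<Rightarrow> ('c, ('c \<times> 'f list) set, 'd, ('d \<times> 'g list) set, 'v) prof \<Rightarrow> bool" where
  "fcp (ty :: 'x itself) C D PP \<longleftrightarrow>
     (\<exists>P :: ('c,'f,'x,'d,'g) curr. curr_pres C D P \<and> finite_curr C D P \<and>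
        prof_isomorphic (sem_cat C) (sem_cat D) PP (sem_curr C D P))"

text \<open>s \<otimes> t for s = p.g a term of P(c) of type d (p : d'), t a term of Q(d):
  s \<otimes> t = p \<otimes> Q(g)(t), and p \<otimes> (q.h) = (p \<otimes> q).h.\<close>
definition tens :: "('d,'g,'y,'e,'h) curr \<Rightarrow> 'x \<times> 'g list \<Rightarrow> 'y \<times> 'h list \<Rightarrow> ('x \<times> 'y) \<times> 'h list" where
  "tens Q s t = (let u = apply_path Q (snd s) t in ((fst s, fst u), snd u))"

definition ccomp :: "('d,'g) catpres \<Rightarrow> ('e,'h) catpres \<Rightarrow> ('c,'f,'x,'d,'g) curr
    \<Rightarrow> ('d,'g,'y,'e,'h) curr \<Rightarrow> ('c,'f,'x \<times> 'y,'e,'h) curr" where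
  "ccomp D E P Q = \<lparr>
     cinst = (\<lambda>c. \<lparr> gens = {(p,q). p \<in> gens (cinst P c) \<and> q \<in> gens (cinst Q (gsort (cinst P c) p))},
                    gsort = (\<lambda>(p,q). gsort (cinst Q (gsort (cinst P c) p)) q),
                    ieqs = {(tens Q s (q, []), tens Q s' (q, [])) | s s' q.
                               (s,s') \<in> ieqs (cinst P c) \<and> q \<in> gens (cinst Q (ttype D (cinst P c) s))}
                         \<union> {(tens Q (p, []) t, tens Q (p, []) t') | p t t'.
                               p \<in> gens (cinst P c) \<and> (t,t') \<in> ieqs (cinst Q (gsort (cinst P c) p))} \<rparr>),
     cmor = (\<lambda>f (p,q). tens Q (cmor P f p) (q, [])) \<rparr>"

definition ccomp_morph :: "('c,'f,'x,'d,'g) curr \<Rightarrow> ('d,'g,'y','e,'h) curr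
    \<Rightarrow> ('c \<Rightarrow> 'x \<Rightarrow> 'x' \<times> 'g list) \<Rightarrow> ('d \<Rightarrow> 'y \<Rightarrow> 'y' \<times> 'h list)
    \<Rightarrow> 'c \<Rightarrow> 'x \<times> 'y \<Rightarrow> ('x' \<times> 'y') \<times> 'h list" where
  "ccomp_morph P Q' \<phi> \<psi> c pq =
     (case pq of (p,q) \<Rightarrow> tens Q' (\<phi> c p) (\<psi> (gsort (cinst P c) p) q))"

definition mu :: "('d,'g) catpres \<Rightarrow> ('e,'h) catpres \<Rightarrow> ('c,'f,'x,'d,'g) curr
    \<Rightarrow> ('d,'g,'y,'e,'h) curr \<Rightarrow> 'c \<Rightarrow> 'e
    \<Rightarrow> ('d \<times> ('x \<times> 'g list) set \<times> ('y \<times> 'h list) set) set \<Rightarrow> (('x \<times> 'y) \<times> 'h list) set" where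
  "mu D E P Q c e X =
     (case rep X of (d,S,T) \<Rightarrow> tclass E (cinst (ccomp D E P Q) c) (tens Q (rep S) (rep T)))"

end

theory Submission
  imports Defs
begin

text \<open>
  The comparison map sends \<open>\<langle>[s], [t]\<rangle>\<close> to \<open>[s \<otimes> t]\<close>. It respects the coend relation because
  moving a path of \<open>D\<close> across the tensor, \<open>(s.g) \<otimes> t = s \<otimes> Q(g)(t)\<close>, is built into \<open>\<otimes>\<close>, and it
  respects the equations of \<open>P(c)\<close> and \<open>Q(d)\<close> because these generate the equations of
  \<open>(P \<circledast> Q)(c)\<close>. Conversely a term \<open>(x \<otimes> q).h\<close> is sent to \<open>\<langle>[x], [q.h]\<rangle>\<close>; this respects the
  equations of \<open>(P \<circledast> Q)(c)\<close> since the coend relation lets the path of an arbitrary \<open>s = x.g\<close>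
  slide over to the \<open>Q\<close>-side, and right multiplication by paths of \<open>E\<close> is compatible with the coend
  relation. The two maps are mutually inverse on representatives, naturality in \<open>C\<close> and \<open>E\<close> is
  read off on representatives, and naturality in \<open>P\<close> and \<open>Q\<close> comes from morphisms of curried
  presentations commuting with the action of paths. The generators and equations of \<open>(P \<circledast> Q)(c)\<close>
  are indexed by finite sums of finite sets. Finally, composing \<open>\<mu>\<close> with the horizontal composite of
  the isomorphisms witnessing finite curried presentability shows that \<open>\<P> \<odot> \<Q>\<close> is finitely curried
  presentable.
\<close>

section \<open>Paths and the presented category\<close>

lemma ptgt_Nil [simp]: "ptgt C (c, []) = c"
  by (simp add: ptgt_def)

lemma ptgt_Cons [simp]: "ptgt C (c, f # fs) = ptgt C (scod C f, fs)"
  by (simp add: ptgt_def)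

lemma ptgt_snoc [simp]: "ptgt C (c, fs @ [f]) = scod C f"
  by (simp add: ptgt_def)

lemma ptgt_append: "ptgt C (c, fs @ gs) = ptgt C (ptgt C (c, fs), gs)"
  by (simp add: ptgt_def)

lemma path_ok_append [simp]:
  "path_ok C c (fs @ gs) \<longleftrightarrow> path_ok C c fs \<and> path_ok C (ptgt C (c, fs)) gs"
  by (induction fs arbitrary: c) auto

lemma ptgt_in_sorts:
  "wf_catpres C \<Longrightarrow> c \<in> sorts C \<Longrightarrow> path_ok C c fs \<Longrightarrow> ptgt C (c, fs) \<in> sorts C"
  by (induction fs arbitrary: c) (auto simp: wf_catpres_def)

lemma valid_path_sorts:
  "wf_catpres C \<Longrightarrow> valid_path C p \<Longrightarrow> fst p \<in> sorts C \<and> ptgt C p \<in> sorts C"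
  using ptgt_in_sorts[of C "fst p" "snd p"] by (simp add: valid_path_def)

lemma peq_valid:
  assumes "wf_catpres C" "peq C p q"
  shows "valid_path C p \<and> valid_path C q \<and> fst p = fst q \<and> ptgt C p = ptgt C q"
  using assms(2)
proof induction
  case (peq_eq p q)
  then show ?case using assms(1) by (auto simp: wf_catpres_def)
next
  case (peq_right p q f)
  then show ?case by (cases p; cases q) (auto simp: valid_path_def ptgt_append)
next
  case (peq_left p q f)
  then show ?case using assms(1) by (cases p; cases q) (auto simp: valid_path_def wf_catpres_def)
qed auto

lemma rep_in: "X \<noteq> {} \<Longrightarrow> rep X \<in> X"
  unfolding rep_def by (simp add: some_in_eq)

lemma pclass_rep: "valid_path C p \<Longrightarrow> peq C p (rep (pclass C p))"
proof -
  assume "valid_path C p"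
  then have "p \<in> pclass C p" by (simp add: pclass_def peq_refl)
  then have "rep (pclass C p) \<in> pclass C p" by (intro rep_in) auto
  then show ?thesis by (simp add: pclass_def)
qed

lemma sem_cat_simps [simp]:
  "c_obj (sem_cat C) = sorts C"
  "c_mor (sem_cat C) = {pclass C p | p. valid_path C p}"
  "c_id (sem_cat C) c = pclass C (c, [])"
  by (simp_all add: sem_cat_def)

lemma sem_cat_dom: "wf_catpres C \<Longrightarrow> valid_path C p \<Longrightarrow> c_dom (sem_cat C) (pclass C p) = fst p"
  using pclass_rep peq_valid by (fastforce simp: sem_cat_def)

lemma sem_cat_cod: "wf_catpres C \<Longrightarrow> valid_path C p \<Longrightarrow> c_cod (sem_cat C) (pclass C p) = ptgt C p"
  using pclass_rep peq_valid by (fastforce simp: sem_cat_def)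

lemma sem_cat_dom_cod_obj:
  "wf_catpres C \<Longrightarrow> f \<in> c_mor (sem_cat C) \<Longrightarrow>
     c_dom (sem_cat C) f \<in> c_obj (sem_cat C) \<and> c_cod (sem_cat C) f \<in> c_obj (sem_cat C)"
  using sem_cat_dom sem_cat_cod valid_path_sorts by fastforce

lemma sem_cat_id:
  assumes "wf_catpres C" "c \<in> sorts C"
  shows "c_id (sem_cat C) c \<in> c_mor (sem_cat C)"
    and "c_dom (sem_cat C) (c_id (sem_cat C) c) = c" "c_cod (sem_cat C) (c_id (sem_cat C) c) = c"
proof -
  have "valid_path C (c, [])" using assms(2) by (simp add: valid_path_def)
  then show "c_id (sem_cat C) c \<in> c_mor (sem_cat C)"
    "c_dom (sem_cat C) (c_id (sem_cat C) c) = c" "c_cod (sem_cat C) (c_id (sem_cat C) c) = c"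
    using sem_cat_dom[OF assms(1)] sem_cat_cod[OF assms(1)] by auto
qed

lemma ttype_append: "ttype D I (fst t, snd t @ h) = ptgt D (ttype D I t, h)"
  by (simp add: ttype_def ptgt_append)

lemma ttype_gen [simp]: "ttype D I (x, []) = gsort I x"
  by (simp add: ttype_def)

lemma ttype_snoc [simp]: "ttype D I (x, h @ [f]) = scod D f"
  by (simp add: ttype_def)

lemma valid_term_append:
  "valid_term D I t \<Longrightarrow> path_ok D (ttype D I t) h \<Longrightarrow> valid_term D I (fst t, snd t @ h)"
  by (simp add: valid_term_def valid_path_def ttype_def)

lemma valid_term_gen:
  "x \<in> gens I \<Longrightarrow> gsort I x \<in> sorts D \<Longrightarrow> valid_term D I (x, [])"
  by (simp add: valid_term_def valid_path_def)

lemma teq_valid: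
  assumes "wf_catpres D" "wf_inspres D I" "teq D I s t"
  shows "valid_term D I s \<and> valid_term D I t \<and> ttype D I s = ttype D I t"
  using assms(3)
proof induction
  case (teq_eq s t)
  then show ?case using assms(2) by (auto simp: wf_inspres_def)
next
  case (teq_right s t f)
  then show ?case by (auto simp: valid_term_def valid_path_def ttype_def ptgt_append)
next
  case (teq_ceq t p q)
  moreover obtain p1 p2 q1 q2 where "p = (p1, p2)" "q = (q1, q2)" by fastforce
  ultimately show ?case
    using assms(1) valid_term_append[of D I t "snd p"] valid_term_append[of D I t "snd q"]
    by (fastforce simp: wf_catpres_def valid_path_def ttype_append)
qed auto

lemma teq_append:
  "teq D I s t \<Longrightarrow> path_ok D (ttype D I s) h \<Longrightarrow> teq D I (fst s, snd s @ h) (fst t, snd t @ h)"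
proof (induction h arbitrary: s t)
  case (Cons f h)
  then have "teq D I (fst s, snd s @ [f]) (fst t, snd t @ [f])" by (auto intro: teq_right)
  moreover have "path_ok D (ttype D I (fst s, snd s @ [f])) h" using Cons by (simp add: ttype_def)
  ultimately show ?case using Cons.IH by fastforce
qed simp

lemmas [trans] = teq_trans

lemma tclass_eq: "teq D I s t \<Longrightarrow> tclass D I s = tclass D I t"
  unfolding tclass_def by (auto intro: teq_trans teq_sym)

lemma teq_rep_tclass: "valid_term D I t \<Longrightarrow> teq D I (rep (tclass D I t)) t"
proof -
  assume "valid_term D I t"
  then have "t \<in> tclass D I t" by (simp add: tclass_def teq_refl)
  then have "rep (tclass D I t) \<in> tclass D I t" by (intro rep_in) auto
  then show ?thesis by (simp add: tclass_def teq_sym)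
qed

lemma rep_tclass:
  assumes "wf_catpres D" "wf_inspres D I" "valid_term D I t"
  shows "valid_term D I (rep (tclass D I t))" "ttype D I (rep (tclass D I t)) = ttype D I t"
  using teq_valid[OF assms(1,2) teq_rep_tclass[OF assms(3)]] by auto

lemma tclass_rep_append:
  assumes "wf_catpres D" "wf_inspres D I" "valid_term D I t" "path_ok D (ttype D I t) h"
  shows "tclass D I (fst (rep (tclass D I t)), snd (rep (tclass D I t)) @ h) = tclass D I (fst t, snd t @ h)"
  using assms rep_tclass[OF assms(1-3)] by (intro tclass_eq teq_append teq_rep_tclass) auto

lemma teq_append_peq:
  assumes "wf_catpres D" "peq D p q"
  shows "valid_term D I t \<Longrightarrow> fst p = ttype D I t \<Longrightarrow>
    teq D I (fst t, snd t @ snd p) (fst t, snd t @ snd q)"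
  using assms(2)
proof (induction arbitrary: t)
  case (peq_eq p q)
  then show ?case by (auto intro: teq_ceq)
next
  case (peq_refl p)
  then show ?case by (auto intro!: teq_refl valid_term_append simp: valid_path_def)
next
  case (peq_sym p q)
  then show ?case using peq_valid[OF assms(1) peq_sym(1)] by (auto intro: teq_sym)
next
  case (peq_trans p q r)
  then show ?case using peq_valid[OF assms(1) peq_trans(1)] by (metis teq_trans)
next
  case (peq_right p q f)
  have "sdom D f = ttype D I (fst t, snd t @ snd p)"
    using peq_right by (simp add: ttype_append) (simp add: ttype_def ptgt_def)
  then have "teq D I (fst t, (snd t @ snd p) @ [f]) (fst t, (snd t @ snd q) @ [f])"
    using teq_right[of D I _ _ f] peq_right by fastforce
  then show ?case by simp
next
  case (peq_left p q f)
  have "valid_term D I (fst t, snd t @ [f])" using peq_left by (auto intro!: valid_term_append)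
  moreover have "fst p = ttype D I (fst t, snd t @ [f])" using peq_left by (simp add: ttype_def)
  ultimately show ?case using peq_left.IH by fastforce
qed

lemma tapp_tapp: "tapp G (tapp F t) = tapp (mcomp G F) t"
  by (simp add: tapp_def mcomp_def)

lemma wf_inspresI:
  assumes "\<And>x. x \<in> gens I \<Longrightarrow> gsort I x \<in> sorts D"
    and "\<And>s t. (s, t) \<in> ieqs I \<Longrightarrow> valid_term D I s \<and> valid_term D I t \<and> ttype D I s = ttype D I t"
  shows "wf_inspres D I"
  using assms by (auto simp: wf_inspres_def)

lemma inst_morphI:
  assumes "\<And>x. x \<in> gens I \<Longrightarrow> valid_term D J (F x) \<and> ttype D J (F x) = gsort I x"
    and "\<And>s t. (s, t) \<in> ieqs I \<Longrightarrow> teq D J (tapp F s) (tapp F t)"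
  shows "inst_morph D I J F"
  using assms by (auto simp: inst_morph_def)

lemma inst_morph_valid:
  assumes "inst_morph D I J F" "valid_term D I t"
  shows "valid_term D J (tapp F t) \<and> ttype D J (tapp F t) = ttype D I t"
proof -
  have F: "valid_term D J (F (fst t))" "ttype D J (F (fst t)) = gsort I (fst t)"
    using assms by (auto simp: inst_morph_def valid_term_def)
  moreover have "path_ok D (ttype D J (F (fst t))) (snd t)"
    using F assms(2) by (simp add: valid_term_def valid_path_def)
  ultimately show ?thesis using valid_term_append[OF F(1)]
    by (simp add: tapp_def ttype_append) (simp add: ttype_def)
qed

lemma inst_morph_teq:
  assumes wfD: "wf_catpres D" and wfI: "wf_inspres D I" and F: "inst_morph D I J F"
    and "teq D I s t"
  shows "teq D J (tapp F s) (tapp F t)"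
  using assms(4)
proof induction
  case (teq_eq s t)
  then show ?case using F by (auto simp: inst_morph_def)
next
  case (teq_refl t)
  then show ?case using inst_morph_valid[OF F] by (blast intro: teq.teq_refl)
next
  case (teq_sym s t)
  then show ?case by (auto intro: teq.teq_sym)
next
  case (teq_trans s t u)
  then show ?case by (auto intro: teq.teq_trans)
next
  case (teq_right s t f)
  have "valid_term D I s" using teq_valid[OF wfD wfI teq_right(1)] by auto
  then have "teq D J (fst (tapp F s), snd (tapp F s) @ [f]) (fst (tapp F t), snd (tapp F t) @ [f])"
    using teq_right inst_morph_valid[OF F \<open>valid_term D I s\<close>] by (auto intro: teq.teq_right)
  then show ?case by (simp add: tapp_def)
next
  case (teq_ceq t p q)
  then have "teq D J (fst (tapp F t), snd (tapp F t) @ snd p) (fst (tapp F t), snd (tapp F t) @ snd q)"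
    using inst_morph_valid[OF F teq_ceq(1)] by (auto intro: teq.teq_ceq)
  then show ?case by (simp add: tapp_def)
qed

lemma morph_eq_teq:
  assumes "morph_eq D I J F G" "\<forall>x\<in>gens I. valid_term D J (F x) \<and> ttype D J (F x) = gsort I x"
    and "valid_term D I t"
  shows "teq D J (tapp F t) (tapp G t)"
proof -
  have "teq D J (F (fst t)) (G (fst t))" using assms by (auto simp: morph_eq_def valid_term_def)
  moreover have "path_ok D (ttype D J (F (fst t))) (snd t)"
    using assms by (auto simp: valid_term_def valid_path_def)
  ultimately show ?thesis using teq_append by (fastforce simp: tapp_def)
qed

lemma mcomp_valid:
  assumes "inst_morph D I J F" "inst_morph D J K G" "x \<in> gens I"
  shows "valid_term D K (mcomp G F x) \<and> ttype D K (mcomp G F x) = gsort I x"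
proof -
  have "valid_term D J (F x)" "ttype D J (F x) = gsort I x" using assms by (auto simp: inst_morph_def)
  then show ?thesis using inst_morph_valid[OF assms(2)] by (simp add: mcomp_def)
qed

lemma apply_path_Nil [simp]: "apply_path P [] t = t"
  by (simp add: apply_path_def)

lemma apply_path_Cons [simp]: "apply_path P (f # fs) t = tapp (cmor P f) (apply_path P fs t)"
  by (simp add: apply_path_def)

lemma apply_path_append: "apply_path P (fs @ gs) t = apply_path P fs (apply_path P gs t)"
  by (simp add: apply_path_def)

lemma apply_path_extend:
  "apply_path P fs (fst t, snd t @ h) = (fst (apply_path P fs t), snd (apply_path P fs t) @ h)"
  by (induction fs) (auto simp: tapp_def)

lemma curr_pres_wf:
  assumes "curr_pres C D P"
  shows "wf_catpres C" "wf_catpres D" "c \<in> sorts C \<Longrightarrow> wf_inspres D (cinst P c)"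
  using assms by (auto simp: curr_pres_def)

lemma curr_pres_sym:
  assumes "curr_pres C D P" "f \<in> syms C"
  shows "sdom C f \<in> sorts C" "scod C f \<in> sorts C"
    and "inst_morph D (cinst P (scod C f)) (cinst P (sdom C f)) (cmor P f)"
  using assms by (auto simp: curr_pres_def wf_catpres_def)

lemma apply_path_valid:
  assumes "curr_pres C D P" "c \<in> sorts C" "path_ok C c fs"
    and "valid_term D (cinst P (ptgt C (c, fs))) t"
  shows "valid_term D (cinst P c) (apply_path P fs t)
    \<and> ttype D (cinst P c) (apply_path P fs t) = ttype D (cinst P (ptgt C (c, fs))) t"
  using assms(2-4)
proof (induction fs arbitrary: c)
  case (Cons f fs)
  note f = curr_pres_sym[OF assms(1) conjunct1[OF Cons.prems(2)[simplified]]]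
  have "valid_term D (cinst P (scod C f)) (apply_path P fs t)
      \<and> ttype D (cinst P (scod C f)) (apply_path P fs t) = ttype D (cinst P (ptgt C (c, f # fs))) t"
    using Cons f(2) by simp
  then show ?case using inst_morph_valid[OF f(3)] Cons.prems(2) by auto
qed simp

lemma apply_path_teq:
  assumes "curr_pres C D P" "c \<in> sorts C" "path_ok C c fs"
    and "teq D (cinst P (ptgt C (c, fs))) t t'"
  shows "teq D (cinst P c) (apply_path P fs t) (apply_path P fs t')"
  using assms(2-4)
proof (induction fs arbitrary: c)
  case (Cons f fs)
  note f = curr_pres_sym[OF assms(1) conjunct1[OF Cons.prems(2)[simplified]]]
  have "teq D (cinst P (scod C f)) (apply_path P fs t) (apply_path P fs t')"
    using Cons f(2) by simp
  then show ?case
    using inst_morph_teq[OF curr_pres_wf(2)[OF assms(1)] curr_pres_wf(3)[OF assms(1) f(2)] f(3)]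
      Cons.prems(2)
    by auto
qed simp

text \<open>For a defining equation of \<open>C\<close> this is the coherence condition of a curried presentation,
  extended from generators to terms.\<close>

lemma apply_path_peq:
  assumes cp: "curr_pres C D P" and "peq C p q"
  shows "valid_term D (cinst P (ptgt C p)) t \<Longrightarrow>
    teq D (cinst P (fst p)) (apply_path P (snd p) t) (apply_path P (snd q) t)"
  using assms(2)
proof (induction arbitrary: t)
  note wfC = curr_pres_wf(1)[OF cp] and wfD = curr_pres_wf(2)[OF cp]
  {
    case (peq_eq p q)
    obtain x h where t: "t = (x, h)" by fastforce
    have vp: "valid_path C p" "fst p = fst q" "ptgt C p = ptgt C q"
      using peq_eq wfC by (auto simp: wf_catpres_def)
    have x: "x \<in> gens (cinst P (ptgt C p))" "path_ok D (gsort (cinst P (ptgt C p)) x) h"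
      "gsort (cinst P (ptgt C p)) x \<in> sorts D"
      using peq_eq t by (auto simp: valid_term_def valid_path_def)
    have "morph_eq D (cinst P (ptgt C p)) (cinst P (fst p))
        (\<lambda>x. apply_path P (snd p) (x, [])) (\<lambda>x. apply_path P (snd q) (x, []))"
      using cp peq_eq by (auto simp: curr_pres_def)
    then have e: "teq D (cinst P (fst p)) (apply_path P (snd p) (x, [])) (apply_path P (snd q) (x, []))"
      using x by (simp add: morph_eq_def)
    have "valid_term D (cinst P (ptgt C p)) (x, [])"
      using x by (simp add: valid_term_gen)
    then have "ttype D (cinst P (fst p)) (apply_path P (snd p) (x, [])) = gsort (cinst P (ptgt C p)) x"
      using apply_path_valid[OF cp, of "fst p" "snd p" "(x, [])"] vp(1)
      by (simp add: valid_path_def)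
    then show ?case
      using teq_append[OF e] x(2) t apply_path_extend[of P _ "(x, [])" h] by simp
  next
    case (peq_refl p)
    then show ?case using apply_path_valid[OF cp, of "fst p" "snd p" t]
      by (auto intro!: teq_refl simp: valid_path_def)
  next
    case (peq_sym p q)
    then show ?case using peq_valid[OF wfC peq_sym(1)] by (metis teq_sym)
  next
    case (peq_trans p q r)
    then show ?case using peq_valid[OF wfC peq_trans(1)] peq_valid[OF wfC peq_trans(2)]
      by (metis teq_trans)
  next
    case (peq_right p q f)
    have "valid_term D (cinst P (ptgt C p)) (tapp (cmor P f) t)"
      using peq_right curr_pres_sym[OF cp peq_right(2)] inst_morph_valid by fastforce
    then show ?case using peq_right by (simp add: apply_path_append)
  next
    case (peq_left p q f)
    then have "teq D (cinst P (fst p)) (apply_path P (snd p) t) (apply_path P (snd q) t)"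
      by (cases p) auto
    moreover note f = curr_pres_sym[OF cp peq_left(2)]
    ultimately show ?case
      using inst_morph_teq[OF wfD curr_pres_wf(3)[OF cp f(2)] f(3)] peq_left(3) by simp
  }
qed

lemma pobj_sem_curr:
  "pobj (sem_curr C D P) c d =
     {tclass D (cinst P c) t | t. valid_term D (cinst P c) t \<and> ttype D (cinst P c) t = d}"
  by (simp add: sem_curr_def)

lemma pmor_sem_curr:
  assumes cp: "curr_pres C D P" and vp: "valid_path C p" and vq: "valid_path D q"
    and vt: "valid_term D (cinst P (ptgt C p)) t" and ty: "ttype D (cinst P (ptgt C p)) t = fst q"
  shows "pmor (sem_curr C D P) (pclass C p) (pclass D q) (tclass D (cinst P (ptgt C p)) t)
      = tclass D (cinst P (fst p)) (fst (apply_path P (snd p) t), snd (apply_path P (snd p) t) @ snd q)"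
    and "valid_term D (cinst P (fst p)) (fst (apply_path P (snd p) t), snd (apply_path P (snd p) t) @ snd q)"
    and "ttype D (cinst P (fst p)) (fst (apply_path P (snd p) t), snd (apply_path P (snd p) t) @ snd q)
      = ptgt D q"
proof -
  note wfC = curr_pres_wf(1)[OF cp] and wfD = curr_pres_wf(2)[OF cp]
  define p' where "p' = rep (pclass C p)"
  define q' where "q' = rep (pclass D q)"
  define t' where "t' = rep (tclass D (cinst P (ptgt C p)) t)"
  let ?u = "apply_path P (snd p) t"
  have pp: "peq C p p'" using pclass_rep[OF vp] p'_def by simp
  have qq: "peq D q q'" using pclass_rep[OF vq] q'_def by simp
  have p': "valid_path C p'" "fst p' = fst p" "ptgt C p' = ptgt C p"
    using peq_valid[OF wfC pp] by auto
  then have pv: "fst p' = fst p" "ptgt C p' = ptgt C p" "ptgt C (fst p, snd p') = ptgt C p"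
    "path_ok C (fst p) (snd p')"
    by (auto simp: valid_path_def) (metis prod.collapse)
  have qv: "fst q' = fst q" "path_ok D (fst q) (snd q')"
    using peq_valid[OF wfD qq] by (auto simp: valid_path_def)
  have sp: "fst p \<in> sorts C" using valid_path_sorts[OF wfC vp] by auto
  have va: "valid_term D (cinst P (fst p)) ?u" "ttype D (cinst P (fst p)) ?u = fst q"
    using apply_path_valid[OF cp sp, of "snd p" t] vp vt ty by (auto simp: valid_path_def)
  have "teq D (cinst P (fst p)) (apply_path P (snd p') t') (apply_path P (snd p') t)"
    using apply_path_teq[OF cp sp pv(4), of t' t] pv teq_rep_tclass[OF vt] t'_def by simp
  moreover have "teq D (cinst P (fst p)) (apply_path P (snd p') t) ?u"
    using apply_path_peq[OF cp peq_sym[OF pp]] vt pv by simp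
  ultimately have u: "teq D (cinst P (fst p)) (apply_path P (snd p') t') ?u"
    by (rule teq_trans)
  have "ttype D (cinst P (fst p)) (apply_path P (snd p') t') = fst q"
    using teq_valid[OF wfD curr_pres_wf(3)[OF cp sp] u] va(2) by simp
  then have "teq D (cinst P (fst p))
      (fst (apply_path P (snd p') t'), snd (apply_path P (snd p') t') @ snd q') (fst ?u, snd ?u @ snd q')"
    using teq_append[OF u, of "snd q'"] qv(2) by simp
  also have "teq D (cinst P (fst p)) (fst ?u, snd ?u @ snd q') (fst ?u, snd ?u @ snd q)"
    using teq_append_peq[OF wfD peq_sym[OF qq] va(1)] va(2) qv by simp
  finally have "tclass D (cinst P (fst p))
      (fst (apply_path P (snd p') t'), snd (apply_path P (snd p') t') @ snd q')
      = tclass D (cinst P (fst p)) (fst ?u, snd ?u @ snd q)"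
    by (rule tclass_eq)
  then show "pmor (sem_curr C D P) (pclass C p) (pclass D q) (tclass D (cinst P (ptgt C p)) t)
      = tclass D (cinst P (fst p)) (fst ?u, snd ?u @ snd q)"
    using pv(1) by (simp add: sem_curr_def Let_def p'_def q'_def t'_def)
  show "valid_term D (cinst P (fst p)) (fst ?u, snd ?u @ snd q)"
    using valid_term_append[OF va(1)] va(2) vq by (simp add: valid_path_def)
  show "ttype D (cinst P (fst p)) (fst ?u, snd ?u @ snd q) = ptgt D q"
    using va ttype_append[of D "cinst P (fst p)" ?u "snd q"] by (metis prod.collapse)
qed

section \<open>The composite presentation\<close>

lemma ccomp_gens:
  "gens (cinst (ccomp D E P Q) c) =
     {(p, q). p \<in> gens (cinst P c) \<and> q \<in> gens (cinst Q (gsort (cinst P c) p))}"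
  by (simp add: ccomp_def)

lemma ccomp_gsort [simp]:
  "gsort (cinst (ccomp D E P Q) c) (p, q) = gsort (cinst Q (gsort (cinst P c) p)) q"
  by (simp add: ccomp_def)

lemma ccomp_cmor [simp]: "cmor (ccomp D E P Q) f (p, q) = tens Q (cmor P f p) (q, [])"
  by (simp add: ccomp_def)

lemma ccomp_ieqsE:
  assumes "(w, w') \<in> ieqs (cinst (ccomp D E P Q) c)"
  obtains (left) s s' q where "w = tens Q s (q, [])" "w' = tens Q s' (q, [])"
      "(s, s') \<in> ieqs (cinst P c)" "q \<in> gens (cinst Q (ttype D (cinst P c) s))"
    | (right) x t t' where "w = tens Q (x, []) t" "w' = tens Q (x, []) t'"
      "x \<in> gens (cinst P c)" "(t, t') \<in> ieqs (cinst Q (gsort (cinst P c) x))"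
  using assms by (auto simp: ccomp_def)

lemma ccomp_ieqs_leftI:
  "(s, s') \<in> ieqs (cinst P c) \<Longrightarrow> q \<in> gens (cinst Q (ttype D (cinst P c) s)) \<Longrightarrow>
     (tens Q s (q, []), tens Q s' (q, [])) \<in> ieqs (cinst (ccomp D E P Q) c)"
  unfolding ccomp_def curr.simps inspres.simps by blast

lemma ccomp_ieqs_rightI:
  "x \<in> gens (cinst P c) \<Longrightarrow> (t, t') \<in> ieqs (cinst Q (gsort (cinst P c) x)) \<Longrightarrow>
     (tens Q (x, []) t, tens Q (x, []) t') \<in> ieqs (cinst (ccomp D E P Q) c)"
  unfolding ccomp_def curr.simps inspres.simps by blast

lemma tens_gen: "tens Q (x, []) u = ((x, fst u), snd u)"
  by (simp add: tens_def)

lemma tens_split: "tens Q s t = tens Q (fst s, []) (apply_path Q (snd s) t)"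
  by (simp add: tens_def Let_def)

lemma tens_extend_left: "tens Q (fst s, snd s @ h) t = tens Q s (apply_path Q h t)"
  by (simp add: tens_def Let_def apply_path_append)

lemma tens_extend_right: "tens Q s (fst t, snd t @ h) = (fst (tens Q s t), snd (tens Q s t) @ h)"
  by (simp add: tens_def Let_def apply_path_extend)

lemma tens_tapp: "tens Q (tapp F s) t = tens Q (F (fst s)) (apply_path Q (snd s) t)"
  by (simp add: tens_def Let_def tapp_def apply_path_append)

lemma ccomp_tapp: "tapp (cmor (ccomp D E P Q) f) (tens Q s t) = tens Q (tapp (cmor P f) s) t"
proof -
  let ?u = "apply_path Q (snd s) t"
  have "tapp (cmor (ccomp D E P Q) f) (tens Q s t) =
      (fst (tens Q (cmor P f (fst s)) (fst ?u, [])), snd (tens Q (cmor P f (fst s)) (fst ?u, [])) @ snd ?u)"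
    by (simp add: tens_def tapp_def Let_def)
  also have "\<dots> = tens Q (cmor P f (fst s)) ?u"
    using tens_extend_right[of Q "cmor P f (fst s)" "(fst ?u, [])" "snd ?u"] by simp
  finally show ?thesis by (simp add: tens_tapp)
qed

lemma apply_path_ccomp: "apply_path (ccomp D E P Q) fs (tens Q s t) = tens Q (apply_path P fs s) t"
  by (induction fs) (simp_all add: ccomp_tapp)

section \<open>Coends and natural transformations\<close>

lemma coend_carrier_iff:
  "(b, p, q) \<in> coend_carrier B P Q a c \<longleftrightarrow> b \<in> c_obj B \<and> p \<in> pobj P a b \<and> q \<in> pobj Q b c"
  by (simp add: coend_carrier_def)

lemma coend_class_eq:
  "equivclp (coend_gen A B C P Q a c) u v \<Longrightarrow> coend_class A B C P Q a c u = coend_class A B C P Q a c v"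
proof -
  assume uv: "equivclp (coend_gen A B C P Q a c) u v"
  have "equivclp (coend_gen A B C P Q a c) u w \<longleftrightarrow> equivclp (coend_gen A B C P Q a c) v w" for w
    using equivclp_trans[OF uv] equivclp_trans[OF equivclp_sym[OF uv]] by blast
  then show ?thesis unfolding coend_class_def by simp
qed

lemma coend_class_eqD:
  "v \<in> coend_carrier B P Q a c \<Longrightarrow> coend_class A B C P Q a c u = coend_class A B C P Q a c v \<Longrightarrow>
     equivclp (coend_gen A B C P Q a c) u v"
proof -
  assume "v \<in> coend_carrier B P Q a c" "coend_class A B C P Q a c u = coend_class A B C P Q a c v"
  then have "v \<in> coend_class A B C P Q a c u" by (simp add: coend_class_def)
  then show ?thesis by (simp add: coend_class_def)
qed

lemma rep_coend_class:
  assumes "u \<in> coend_carrier B P Q a c"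
  shows "rep (coend_class A B C P Q a c u) \<in> coend_carrier B P Q a c"
    and "equivclp (coend_gen A B C P Q a c) u (rep (coend_class A B C P Q a c u))"
proof -
  have "u \<in> coend_class A B C P Q a c u" using assms by (simp add: coend_class_def)
  then have "rep (coend_class A B C P Q a c u) \<in> coend_class A B C P Q a c u" by (intro rep_in) auto
  then show "rep (coend_class A B C P Q a c u) \<in> coend_carrier B P Q a c"
    "equivclp (coend_gen A B C P Q a c) u (rep (coend_class A B C P Q a c u))"
    by (auto simp: coend_class_def)
qed

lemma pobj_prof_comp:
  "X \<in> pobj (prof_comp A B C P Q) a c \<longleftrightarrow> (\<exists>u\<in>coend_carrier B P Q a c. X = coend_class A B C P Q a c u)"
  by (auto simp: prof_comp_def)

lemma pobj_prof_comp_rep: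
  assumes "X \<in> pobj (prof_comp A B C P Q) a c"
  shows "rep X \<in> coend_carrier B P Q a c" "X = coend_class A B C P Q a c (rep X)"
proof -
  obtain u where u: "u \<in> coend_carrier B P Q a c" "X = coend_class A B C P Q a c u"
    using assms pobj_prof_comp by metis
  then show "rep X \<in> coend_carrier B P Q a c" using rep_coend_class by metis
  show "X = coend_class A B C P Q a c (rep X)" using u rep_coend_class[OF u(1)] coend_class_eq by metis
qed

lemma pmor_prof_comp:
  "pmor (prof_comp A B C P Q) f h X = (case rep X of (b, p, q) \<Rightarrow>
     coend_class A B C P Q (c_dom A f) (c_cod C h) (b, pmor P f (c_id B b) p, pmor Q (c_id B b) h q))"
  by (simp add: prof_comp_def)

lemma equivclp_invariant:
  assumes "\<And>u v. r u v \<Longrightarrow> F u = F v" and "equivclp r x y"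
  shows "F x = F y"
  using assms(2) by induction (use assms(1) in auto)

lemma equivclp_map:
  assumes "\<And>u v. r u v \<Longrightarrow> r' (m u) (m v)" and "equivclp r x y"
  shows "equivclp r' (m x) (m y)"
  using assms(2)
proof induction
  case (step y z)
  then have "equivclp r' (m y) (m z)" using assms(1) by (auto intro: equivclp_sym)
  with step(3) show ?case by (rule equivclp_trans)
qed simp

lemma is_profD:
  "is_prof A B P \<Longrightarrow> f \<in> c_mor A \<Longrightarrow> g \<in> c_mor B \<Longrightarrow> x \<in> pobj P (c_cod A f) (c_dom B g) \<Longrightarrow>
     pmor P f g x \<in> pobj P (c_dom A f) (c_cod B g)"
  unfolding is_prof_def by blast

lemma is_ntD:
  "is_nt A B P P' \<alpha> \<Longrightarrow> a \<in> c_obj A \<Longrightarrow> b \<in> c_obj B \<Longrightarrow> x \<in> pobj P a b \<Longrightarrow> \<alpha> a b x \<in> pobj P' a b"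
  "is_nt A B P P' \<alpha> \<Longrightarrow> f \<in> c_mor A \<Longrightarrow> g \<in> c_mor B \<Longrightarrow> x \<in> pobj P (c_cod A f) (c_dom B g) \<Longrightarrow>
     \<alpha> (c_dom A f) (c_cod B g) (pmor P f g x) = pmor P' f g (\<alpha> (c_cod A f) (c_dom B g) x)"
  unfolding is_nt_def by blast+

lemma is_prof_isoE:
  assumes "is_prof_iso A B P P' \<alpha>"
  obtains \<alpha>' where "is_nt A B P P' \<alpha>" "is_nt A B P' P \<alpha>'"
    "\<And>a b x. a \<in> c_obj A \<Longrightarrow> b \<in> c_obj B \<Longrightarrow> x \<in> pobj P a b \<Longrightarrow> \<alpha>' a b (\<alpha> a b x) = x"
    "\<And>a b y. a \<in> c_obj A \<Longrightarrow> b \<in> c_obj B \<Longrightarrow> y \<in> pobj P' a b \<Longrightarrow> \<alpha> a b (\<alpha>' a b y) = y"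
  using assms unfolding is_prof_iso_def by blast

lemma is_nt_comp:
  assumes "is_nt A B P Q \<alpha>" "is_nt A B Q R \<beta>"
    and oA: "\<And>f. f \<in> c_mor A \<Longrightarrow> c_dom A f \<in> c_obj A \<and> c_cod A f \<in> c_obj A"
    and oB: "\<And>g. g \<in> c_mor B \<Longrightarrow> c_dom B g \<in> c_obj B \<and> c_cod B g \<in> c_obj B"
  shows "is_nt A B P R (\<lambda>a b x. \<beta> a b (\<alpha> a b x))"
  unfolding is_nt_def
proof (intro conjI ballI)
  fix a b x assume "a \<in> c_obj A" "b \<in> c_obj B" "x \<in> pobj P a b"
  then show "\<beta> a b (\<alpha> a b x) \<in> pobj R a b" using assms(1,2) by (blast dest: is_ntD(1))
next
  fix f g x assume f: "f \<in> c_mor A" and g: "g \<in> c_mor B" and x: "x \<in> pobj P (c_cod A f) (c_dom B g)"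
  then have "\<alpha> (c_cod A f) (c_dom B g) x \<in> pobj Q (c_cod A f) (c_dom B g)"
    using is_ntD(1)[OF assms(1)] oA oB by blast
  then show "\<beta> (c_dom A f) (c_cod B g) (\<alpha> (c_dom A f) (c_cod B g) (pmor P f g x))
      = pmor R f g (\<beta> (c_cod A f) (c_dom B g) (\<alpha> (c_cod A f) (c_dom B g) x))"
    using is_ntD(2)[OF assms(1) f g x] is_ntD(2)[OF assms(2) f g] by simp
qed

text \<open>Naturality of the inverse of a natural bijection is automatic.\<close>

lemma is_prof_isoI:
  assumes nt: "is_nt A B P P' \<alpha>"
    and \<beta>_obj: "\<And>a b y. a \<in> c_obj A \<Longrightarrow> b \<in> c_obj B \<Longrightarrow> y \<in> pobj P' a b \<Longrightarrow> \<beta> a b y \<in> pobj P a b"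
    and \<beta>\<alpha>: "\<And>a b x. a \<in> c_obj A \<Longrightarrow> b \<in> c_obj B \<Longrightarrow> x \<in> pobj P a b \<Longrightarrow> \<beta> a b (\<alpha> a b x) = x"
    and \<alpha>\<beta>: "\<And>a b y. a \<in> c_obj A \<Longrightarrow> b \<in> c_obj B \<Longrightarrow> y \<in> pobj P' a b \<Longrightarrow> \<alpha> a b (\<beta> a b y) = y"
    and pmor_P: "\<And>f g x. f \<in> c_mor A \<Longrightarrow> g \<in> c_mor B \<Longrightarrow> x \<in> pobj P (c_cod A f) (c_dom B g) \<Longrightarrow>
        pmor P f g x \<in> pobj P (c_dom A f) (c_cod B g)"
    and oA: "\<And>f. f \<in> c_mor A \<Longrightarrow> c_dom A f \<in> c_obj A \<and> c_cod A f \<in> c_obj A"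
    and oB: "\<And>g. g \<in> c_mor B \<Longrightarrow> c_dom B g \<in> c_obj B \<and> c_cod B g \<in> c_obj B"
  shows "is_prof_iso A B P P' \<alpha>"
  unfolding is_prof_iso_def
proof (intro conjI exI[of _ \<beta>])
  show "is_nt A B P' P \<beta>"
    unfolding is_nt_def
  proof (intro conjI ballI)
    fix f g y assume f: "f \<in> c_mor A" and g: "g \<in> c_mor B" and y: "y \<in> pobj P' (c_cod A f) (c_dom B g)"
    define x where "x = \<beta> (c_cod A f) (c_dom B g) y"
    have x: "x \<in> pobj P (c_cod A f) (c_dom B g)" using \<beta>_obj oA[OF f] oB[OF g] y x_def by blast
    have "y = \<alpha> (c_cod A f) (c_dom B g) x" using \<alpha>\<beta> oA[OF f] oB[OF g] y x_def by simp
    then have "pmor P' f g y = \<alpha> (c_dom A f) (c_cod B g) (pmor P f g x)"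
      using is_ntD(2)[OF nt f g x] by simp
    then show "\<beta> (c_dom A f) (c_cod B g) (pmor P' f g y) = pmor P f g (\<beta> (c_cod A f) (c_dom B g) y)"
      using \<beta>\<alpha> oA[OF f] oB[OF g] pmor_P[OF f g x] x_def by simp
  qed (use \<beta>_obj in blast)
qed (use nt \<beta>\<alpha> \<alpha>\<beta> in blast)+

lemma is_prof_iso_trans:
  assumes "is_prof_iso A B P Q \<alpha>" "is_prof_iso A B Q R \<beta>"
    and oA: "\<And>f. f \<in> c_mor A \<Longrightarrow> c_dom A f \<in> c_obj A \<and> c_cod A f \<in> c_obj A"
    and oB: "\<And>g. g \<in> c_mor B \<Longrightarrow> c_dom B g \<in> c_obj B \<and> c_cod B g \<in> c_obj B"
  shows "is_prof_iso A B P R (\<lambda>a b x. \<beta> a b (\<alpha> a b x))"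
proof -
  obtain \<alpha>' where a: "is_nt A B P Q \<alpha>" "is_nt A B Q P \<alpha>'"
      "\<And>a b x. a \<in> c_obj A \<Longrightarrow> b \<in> c_obj B \<Longrightarrow> x \<in> pobj P a b \<Longrightarrow> \<alpha>' a b (\<alpha> a b x) = x"
      "\<And>a b y. a \<in> c_obj A \<Longrightarrow> b \<in> c_obj B \<Longrightarrow> y \<in> pobj Q a b \<Longrightarrow> \<alpha> a b (\<alpha>' a b y) = y"
    using is_prof_isoE[OF assms(1)] by blast
  obtain \<beta>' where b: "is_nt A B Q R \<beta>" "is_nt A B R Q \<beta>'"
      "\<And>a b x. a \<in> c_obj A \<Longrightarrow> b \<in> c_obj B \<Longrightarrow> x \<in> pobj Q a b \<Longrightarrow> \<beta>' a b (\<beta> a b x) = x"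
      "\<And>a b y. a \<in> c_obj A \<Longrightarrow> b \<in> c_obj B \<Longrightarrow> y \<in> pobj R a b \<Longrightarrow> \<beta> a b (\<beta>' a b y) = y"
    using is_prof_isoE[OF assms(2)] by blast
  show ?thesis unfolding is_prof_iso_def
  proof (intro conjI exI[of _ "\<lambda>a b y. \<alpha>' a b (\<beta>' a b y)"])
    show "is_nt A B P R (\<lambda>a b x. \<beta> a b (\<alpha> a b x))" by (rule is_nt_comp[OF a(1) b(1) oA oB])
    show "is_nt A B R P (\<lambda>a b y. \<alpha>' a b (\<beta>' a b y))" by (rule is_nt_comp[OF b(2) a(2) oA oB])
  qed (use a(3,4) b(3,4) is_ntD(1)[OF a(1)] is_ntD(1)[OF b(2)] in auto)
qed

definition coend_map ::
    "('a \<Rightarrow> 'b \<Rightarrow> 'v \<Rightarrow> 'v') \<Rightarrow> ('b \<Rightarrow> 'c \<Rightarrow> 'w \<Rightarrow> 'w') \<Rightarrow> 'a \<Rightarrow> 'c \<Rightarrow> 'b \<times> 'v \<times> 'w \<Rightarrow> 'b \<times> 'v' \<times> 'w'" where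
  "coend_map \<alpha> \<beta> a c u = (case u of (b, p, q) \<Rightarrow> (b, \<alpha> a b p, \<beta> b c q))"

lemma coend_map_carrier:
  assumes "is_nt A B P1 P2 \<alpha>" "is_nt B C Q1 Q2 \<beta>" "a \<in> c_obj A" "c \<in> c_obj C"
    and "u \<in> coend_carrier B P1 Q1 a c"
  shows "coend_map \<alpha> \<beta> a c u \<in> coend_carrier B P2 Q2 a c"
  using assms is_ntD(1)[OF assms(1)] is_ntD(1)[OF assms(2)]
  by (auto simp: coend_map_def coend_carrier_def)

lemma coend_map_inverse:
  assumes "\<And>b x. b \<in> c_obj B \<Longrightarrow> x \<in> pobj P a b \<Longrightarrow> \<alpha>' a b (\<alpha> a b x) = x"
    and "\<And>b x. b \<in> c_obj B \<Longrightarrow> x \<in> pobj Q b c \<Longrightarrow> \<beta>' b c (\<beta> b c x) = x"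
    and "u \<in> coend_carrier B P Q a c"
  shows "coend_map \<alpha>' \<beta>' a c (coend_map \<alpha> \<beta> a c u) = u"
  using assms by (auto simp: coend_map_def coend_carrier_def)

lemma coend_gen_coend_map:
  assumes wf: "wf_catpres C" "wf_catpres D" "wf_catpres E"
    and na: "is_nt (sem_cat C) (sem_cat D) P1 P2 \<alpha>" and nb: "is_nt (sem_cat D) (sem_cat E) Q1 Q2 \<beta>"
    and a: "a \<in> sorts C" and c: "c \<in> sorts E"
    and g: "coend_gen (sem_cat C) (sem_cat D) (sem_cat E) P1 Q1 a c x y"
  shows "coend_gen (sem_cat C) (sem_cat D) (sem_cat E) P2 Q2 a c (coend_map \<alpha> \<beta> a c x) (coend_map \<alpha> \<beta> a c y)"
proof -
  from g obtain G p q where G: "G \<in> c_mor (sem_cat D)"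
    "p \<in> pobj P1 a (c_dom (sem_cat D) G)" "q \<in> pobj Q1 (c_cod (sem_cat D) G) c"
    "x = (c_dom (sem_cat D) G, p, pmor Q1 G (c_id (sem_cat E) c) q)"
    "y = (c_cod (sem_cat D) G, pmor P1 (c_id (sem_cat C) a) G p, q)"
    unfolding coend_gen_def by blast
  note ia = sem_cat_id[OF wf(1) a] and ic = sem_cat_id[OF wf(3) c]
  have o: "c_dom (sem_cat D) G \<in> sorts D" "c_cod (sem_cat D) G \<in> sorts D"
    using sem_cat_dom_cod_obj[OF wf(2) G(1)] by auto
  have "\<beta> (c_dom (sem_cat D) G) c (pmor Q1 G (c_id (sem_cat E) c) q)
      = pmor Q2 G (c_id (sem_cat E) c) (\<beta> (c_cod (sem_cat D) G) c q)"
    using is_ntD(2)[OF nb G(1) ic(1)] G(3) ic by simp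
  moreover have "\<alpha> a (c_cod (sem_cat D) G) (pmor P1 (c_id (sem_cat C) a) G p)
      = pmor P2 (c_id (sem_cat C) a) G (\<alpha> a (c_dom (sem_cat D) G) p)"
    using is_ntD(2)[OF na ia(1) G(1)] G(2) ia by simp
  moreover have "\<alpha> a (c_dom (sem_cat D) G) p \<in> pobj P2 a (c_dom (sem_cat D) G)"
    "\<beta> (c_cod (sem_cat D) G) c q \<in> pobj Q2 (c_cod (sem_cat D) G) c"
    using is_ntD(1)[OF na] is_ntD(1)[OF nb] a c o G(2,3) by auto
  ultimately show ?thesis
    unfolding coend_gen_def using G(1,4,5) by (auto simp: coend_map_def)
qed

lemma prof_comp_nt_coend_class:
  assumes wf: "wf_catpres C" "wf_catpres D" "wf_catpres E"
    and na: "is_nt (sem_cat C) (sem_cat D) P1 P2 \<alpha>" and nb: "is_nt (sem_cat D) (sem_cat E) Q1 Q2 \<beta>"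
    and a: "a \<in> sorts C" and c: "c \<in> sorts E"
    and u: "u \<in> coend_carrier (sem_cat D) P1 Q1 a c"
  shows "prof_comp_nt (sem_cat C) (sem_cat D) (sem_cat E) P2 Q2 \<alpha> \<beta> a c
      (coend_class (sem_cat C) (sem_cat D) (sem_cat E) P1 Q1 a c u)
    = coend_class (sem_cat C) (sem_cat D) (sem_cat E) P2 Q2 a c (coend_map \<alpha> \<beta> a c u)"
proof -
  let ?X = "coend_class (sem_cat C) (sem_cat D) (sem_cat E) P1 Q1 a c u"
  have "equivclp (coend_gen (sem_cat C) (sem_cat D) (sem_cat E) P2 Q2 a c)
      (coend_map \<alpha> \<beta> a c u) (coend_map \<alpha> \<beta> a c (rep ?X))"
    using rep_coend_class(2)[OF u]
    by (rule equivclp_map[rotated]) (rule coend_gen_coend_map[OF wf na nb a c])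
  then show ?thesis
    unfolding prof_comp_nt_def by (simp add: coend_map_def case_prod_beta coend_class_eq)
qed

definition coend_act ::
    "('b,'mb) cat \<Rightarrow> ('a,'ma,'b,'mb,'v) prof \<Rightarrow> ('b,'mb,'c,'mc,'w) prof \<Rightarrow> 'ma \<Rightarrow> 'mc
      \<Rightarrow> 'b \<times> 'v \<times> 'w \<Rightarrow> 'b \<times> 'v \<times> 'w" where
  "coend_act B P Q f h u = (case u of (b, p, q) \<Rightarrow> (b, pmor P f (c_id B b) p, pmor Q (c_id B b) h q))"

lemma pmor_prof_comp_coend_act:
  "pmor (prof_comp A B C P Q) f h X = coend_class A B C P Q (c_dom A f) (c_cod C h) (coend_act B P Q f h (rep X))"
  unfolding pmor_prof_comp coend_act_def by (simp add: case_prod_beta)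

lemma coend_act_carrier:
  assumes "wf_catpres D" "is_prof A (sem_cat D) P" "is_prof (sem_cat D) C Q"
    and f: "f \<in> c_mor A" and h: "h \<in> c_mor C"
    and u: "u \<in> coend_carrier (sem_cat D) P Q (c_cod A f) (c_dom C h)"
  shows "coend_act (sem_cat D) P Q f h u \<in> coend_carrier (sem_cat D) P Q (c_dom A f) (c_cod C h)"
proof -
  obtain b p q where u3: "u = (b, p, q)" by (metis prod.collapse)
  then have b: "b \<in> sorts D" "p \<in> pobj P (c_cod A f) b" "q \<in> pobj Q b (c_dom C h)"
    using u by (auto simp: coend_carrier_iff)
  note idb = sem_cat_id[OF assms(1) b(1)]
  show ?thesis
    using is_profD[OF assms(2) f idb(1)] is_profD[OF assms(3) idb(1) h] idb(2,3) b
    by (simp add: u3 coend_act_def coend_carrier_iff)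
qed

lemma coend_map_coend_act:
  assumes "wf_catpres D" "is_nt A (sem_cat D) P1 P2 \<alpha>" "is_nt (sem_cat D) C Q1 Q2 \<beta>"
    and f: "f \<in> c_mor A" and h: "h \<in> c_mor C"
    and u: "u \<in> coend_carrier (sem_cat D) P1 Q1 (c_cod A f) (c_dom C h)"
  shows "coend_map \<alpha> \<beta> (c_dom A f) (c_cod C h) (coend_act (sem_cat D) P1 Q1 f h u)
    = coend_act (sem_cat D) P2 Q2 f h (coend_map \<alpha> \<beta> (c_cod A f) (c_dom C h) u)"
proof -
  obtain b p q where u3: "u = (b, p, q)" by (metis prod.collapse)
  then have b: "b \<in> sorts D" "p \<in> pobj P1 (c_cod A f) b" "q \<in> pobj Q1 b (c_dom C h)"
    using u by (auto simp: coend_carrier_iff)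
  note idb = sem_cat_id[OF assms(1) b(1)]
  show ?thesis
    using is_ntD(2)[OF assms(2) f idb(1)] is_ntD(2)[OF assms(3) idb(1) h] idb(2,3) b
    by (simp add: u3 coend_act_def coend_map_def)
qed

lemma prof_comp_nt_rep:
  assumes wf: "wf_catpres C" "wf_catpres D" "wf_catpres E"
    and na: "is_nt (sem_cat C) (sem_cat D) P1 P2 \<alpha>" and nb: "is_nt (sem_cat D) (sem_cat E) Q1 Q2 \<beta>"
    and a: "a \<in> sorts C" and c: "c \<in> sorts E"
    and X: "X \<in> pobj (prof_comp (sem_cat C) (sem_cat D) (sem_cat E) P1 Q1) a c"
  shows "prof_comp_nt (sem_cat C) (sem_cat D) (sem_cat E) P2 Q2 \<alpha> \<beta> a c X
      = coend_class (sem_cat C) (sem_cat D) (sem_cat E) P2 Q2 a c (coend_map \<alpha> \<beta> a c (rep X))"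
    and "prof_comp_nt (sem_cat C) (sem_cat D) (sem_cat E) P2 Q2 \<alpha> \<beta> a c X
      \<in> pobj (prof_comp (sem_cat C) (sem_cat D) (sem_cat E) P2 Q2) a c"
proof -
  note u = pobj_prof_comp_rep[OF X]
  show eq: "prof_comp_nt (sem_cat C) (sem_cat D) (sem_cat E) P2 Q2 \<alpha> \<beta> a c X
      = coend_class (sem_cat C) (sem_cat D) (sem_cat E) P2 Q2 a c (coend_map \<alpha> \<beta> a c (rep X))"
    using prof_comp_nt_coend_class[OF wf na nb a c u(1)] u(2) by simp
  show "prof_comp_nt (sem_cat C) (sem_cat D) (sem_cat E) P2 Q2 \<alpha> \<beta> a c X
      \<in> pobj (prof_comp (sem_cat C) (sem_cat D) (sem_cat E) P2 Q2) a c"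
    unfolding eq pobj_prof_comp using coend_map_carrier[OF na nb _ _ u(1)] a c by auto
qed

lemma prof_comp_nt_inverse:
  assumes wf: "wf_catpres C" "wf_catpres D" "wf_catpres E"
    and na: "is_nt (sem_cat C) (sem_cat D) P1 P2 \<alpha>" and nb: "is_nt (sem_cat D) (sem_cat E) Q1 Q2 \<beta>"
    and na': "is_nt (sem_cat C) (sem_cat D) P2 P1 \<alpha>'" and nb': "is_nt (sem_cat D) (sem_cat E) Q2 Q1 \<beta>'"
    and \<alpha>'\<alpha>: "\<And>a b x. a \<in> sorts C \<Longrightarrow> b \<in> sorts D \<Longrightarrow> x \<in> pobj P1 a b \<Longrightarrow> \<alpha>' a b (\<alpha> a b x) = x"
    and \<beta>'\<beta>: "\<And>b c x. b \<in> sorts D \<Longrightarrow> c \<in> sorts E \<Longrightarrow> x \<in> pobj Q1 b c \<Longrightarrow> \<beta>' b c (\<beta> b c x) = x"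
    and a: "a \<in> sorts C" and c: "c \<in> sorts E"
    and X: "X \<in> pobj (prof_comp (sem_cat C) (sem_cat D) (sem_cat E) P1 Q1) a c"
  shows "prof_comp_nt (sem_cat C) (sem_cat D) (sem_cat E) P1 Q1 \<alpha>' \<beta>' a c
      (prof_comp_nt (sem_cat C) (sem_cat D) (sem_cat E) P2 Q2 \<alpha> \<beta> a c X) = X"
proof -
  note u = pobj_prof_comp_rep[OF X]
  have "coend_map \<alpha>' \<beta>' a c (coend_map \<alpha> \<beta> a c (rep X)) = rep X"
    by (rule coend_map_inverse[OF _ _ u(1)]) (use \<alpha>'\<alpha> \<beta>'\<beta> a c in auto)
  then show ?thesis
    using prof_comp_nt_rep(1)[OF wf na nb a c X] coend_map_carrier[OF na nb _ _ u(1)] a c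
      prof_comp_nt_coend_class[OF wf na' nb' a c] u(2)
    by simp
qed

lemma prof_comp_nt_pmor:
  fixes C :: "('c,'f) catpres" and D :: "('d,'g) catpres" and E :: "('e,'h) catpres"
  assumes wf: "wf_catpres C" "wf_catpres D" "wf_catpres E"
    and P1: "is_prof (sem_cat C) (sem_cat D) P1" and Q1: "is_prof (sem_cat D) (sem_cat E) Q1"
    and na: "is_nt (sem_cat C) (sem_cat D) P1 P2 \<alpha>" and nb: "is_nt (sem_cat D) (sem_cat E) Q1 Q2 \<beta>"
    and pmor2: "\<And>f h u. f \<in> c_mor (sem_cat C) \<Longrightarrow> h \<in> c_mor (sem_cat E) \<Longrightarrow>
      u \<in> coend_carrier (sem_cat D) P2 Q2 (c_cod (sem_cat C) f) (c_dom (sem_cat E) h) \<Longrightarrow>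
      pmor (prof_comp (sem_cat C) (sem_cat D) (sem_cat E) P2 Q2) f h
        (coend_class (sem_cat C) (sem_cat D) (sem_cat E) P2 Q2 (c_cod (sem_cat C) f) (c_dom (sem_cat E) h) u)
      = coend_class (sem_cat C) (sem_cat D) (sem_cat E) P2 Q2 (c_dom (sem_cat C) f) (c_cod (sem_cat E) h)
          (coend_act (sem_cat D) P2 Q2 f h u)"
    and f: "f \<in> c_mor (sem_cat C)" and h: "h \<in> c_mor (sem_cat E)"
    and X: "X \<in> pobj (prof_comp (sem_cat C) (sem_cat D) (sem_cat E) P1 Q1) (c_cod (sem_cat C) f) (c_dom (sem_cat E) h)"
  shows "prof_comp_nt (sem_cat C) (sem_cat D) (sem_cat E) P2 Q2 \<alpha> \<beta> (c_dom (sem_cat C) f) (c_cod (sem_cat E) h)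
      (pmor (prof_comp (sem_cat C) (sem_cat D) (sem_cat E) P1 Q1) f h X)
    = pmor (prof_comp (sem_cat C) (sem_cat D) (sem_cat E) P2 Q2) f h
        (prof_comp_nt (sem_cat C) (sem_cat D) (sem_cat E) P2 Q2 \<alpha> \<beta> (c_cod (sem_cat C) f) (c_dom (sem_cat E) h) X)"
proof -
  let ?C = "sem_cat C" and ?D = "sem_cat D" and ?E = "sem_cat E"
  note u = pobj_prof_comp_rep(1)[OF X]
  note oC = sem_cat_dom_cod_obj[OF wf(1) f] and oE = sem_cat_dom_cod_obj[OF wf(3) h]
  have "prof_comp_nt ?C ?D ?E P2 Q2 \<alpha> \<beta> (c_dom ?C f) (c_cod ?E h) (pmor (prof_comp ?C ?D ?E P1 Q1) f h X)
      = coend_class ?C ?D ?E P2 Q2 (c_dom ?C f) (c_cod ?E h)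
          (coend_act ?D P2 Q2 f h (coend_map \<alpha> \<beta> (c_cod ?C f) (c_dom ?E h) (rep X)))"
    unfolding pmor_prof_comp_coend_act
    using prof_comp_nt_coend_class[OF wf na nb _ _ coend_act_carrier[OF wf(2) P1 Q1 f h u]]
      coend_map_coend_act[OF wf(2) na nb f h u] oC oE
    by simp
  also have "\<dots> = pmor (prof_comp ?C ?D ?E P2 Q2) f h
      (prof_comp_nt ?C ?D ?E P2 Q2 \<alpha> \<beta> (c_cod ?C f) (c_dom ?E h) X)"
    using prof_comp_nt_rep(1)[OF wf na nb _ _ X] coend_map_carrier[OF na nb _ _ u] oC oE pmor2[OF f h]
    by simp
  finally show ?thesis .
qed

text \<open>The hypothesis on the target is needed because \<open>prof_comp\<close> acts through a chosen representative,
  so its action is not evidently independent of that choice.\<close>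

lemma prof_comp_nt_iso:
  fixes C :: "('c,'f) catpres" and D :: "('d,'g) catpres" and E :: "('e,'h) catpres"
  assumes wf: "wf_catpres C" "wf_catpres D" "wf_catpres E"
    and P1: "is_prof (sem_cat C) (sem_cat D) P1" and Q1: "is_prof (sem_cat D) (sem_cat E) Q1"
    and ia: "is_prof_iso (sem_cat C) (sem_cat D) P1 P2 \<alpha>" and ib: "is_prof_iso (sem_cat D) (sem_cat E) Q1 Q2 \<beta>"
    and pmor2: "\<And>f h u. f \<in> c_mor (sem_cat C) \<Longrightarrow> h \<in> c_mor (sem_cat E) \<Longrightarrow>
      u \<in> coend_carrier (sem_cat D) P2 Q2 (c_cod (sem_cat C) f) (c_dom (sem_cat E) h) \<Longrightarrow>
      pmor (prof_comp (sem_cat C) (sem_cat D) (sem_cat E) P2 Q2) f h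
        (coend_class (sem_cat C) (sem_cat D) (sem_cat E) P2 Q2 (c_cod (sem_cat C) f) (c_dom (sem_cat E) h) u)
      = coend_class (sem_cat C) (sem_cat D) (sem_cat E) P2 Q2 (c_dom (sem_cat C) f) (c_cod (sem_cat E) h)
          (coend_act (sem_cat D) P2 Q2 f h u)"
  shows "is_prof_iso (sem_cat C) (sem_cat E) (prof_comp (sem_cat C) (sem_cat D) (sem_cat E) P1 Q1)
    (prof_comp (sem_cat C) (sem_cat D) (sem_cat E) P2 Q2) (prof_comp_nt (sem_cat C) (sem_cat D) (sem_cat E) P2 Q2 \<alpha> \<beta>)"
proof -
  obtain \<alpha>' where a: "is_nt (sem_cat C) (sem_cat D) P1 P2 \<alpha>" "is_nt (sem_cat C) (sem_cat D) P2 P1 \<alpha>'"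
      "\<And>a b x. a \<in> sorts C \<Longrightarrow> b \<in> sorts D \<Longrightarrow> x \<in> pobj P1 a b \<Longrightarrow> \<alpha>' a b (\<alpha> a b x) = x"
      "\<And>a b y. a \<in> sorts C \<Longrightarrow> b \<in> sorts D \<Longrightarrow> y \<in> pobj P2 a b \<Longrightarrow> \<alpha> a b (\<alpha>' a b y) = y"
    using is_prof_isoE[OF ia, unfolded sem_cat_simps] by blast
  obtain \<beta>' where b: "is_nt (sem_cat D) (sem_cat E) Q1 Q2 \<beta>" "is_nt (sem_cat D) (sem_cat E) Q2 Q1 \<beta>'"
      "\<And>a b x. a \<in> sorts D \<Longrightarrow> b \<in> sorts E \<Longrightarrow> x \<in> pobj Q1 a b \<Longrightarrow> \<beta>' a b (\<beta> a b x) = x"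
      "\<And>a b y. a \<in> sorts D \<Longrightarrow> b \<in> sorts E \<Longrightarrow> y \<in> pobj Q2 a b \<Longrightarrow> \<beta> a b (\<beta>' a b y) = y"
    using is_prof_isoE[OF ib, unfolded sem_cat_simps] by blast
  let ?C = "sem_cat C" and ?D = "sem_cat D" and ?E = "sem_cat E"
  let ?F = "prof_comp_nt ?C ?D ?E P2 Q2 \<alpha> \<beta>"
  note oC = sem_cat_dom_cod_obj[OF wf(1)] and oE = sem_cat_dom_cod_obj[OF wf(3)]
  show ?thesis
  proof (rule is_prof_isoI[where \<beta> = "prof_comp_nt ?C ?D ?E P1 Q1 \<alpha>' \<beta>'"])
    show "is_nt ?C ?E (prof_comp ?C ?D ?E P1 Q1) (prof_comp ?C ?D ?E P2 Q2) ?F"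
      unfolding is_nt_def
      using prof_comp_nt_rep(2)[OF wf a(1) b(1)] prof_comp_nt_pmor[OF wf P1 Q1 a(1) b(1) pmor2] by auto
  next
    fix f h X assume f: "f \<in> c_mor ?C" and h: "h \<in> c_mor ?E"
      and X: "X \<in> pobj (prof_comp ?C ?D ?E P1 Q1) (c_cod ?C f) (c_dom ?E h)"
    show "pmor (prof_comp ?C ?D ?E P1 Q1) f h X \<in> pobj (prof_comp ?C ?D ?E P1 Q1) (c_dom ?C f) (c_cod ?E h)"
      unfolding pmor_prof_comp_coend_act pobj_prof_comp
      using coend_act_carrier[OF wf(2) P1 Q1 f h pobj_prof_comp_rep(1)[OF X]] by blast
  qed (use prof_comp_nt_rep(2)[OF wf a(2) b(2)] prof_comp_nt_inverse[OF wf a(1) b(1) a(2) b(2) a(3) b(3)]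
      prof_comp_nt_inverse[OF wf a(2) b(2) a(1) b(1) a(4) b(4)] oC oE in auto)
qed

locale composable_curr =
  fixes C :: "('c,'f) catpres" and D :: "('d,'g) catpres" and E :: "('e,'h) catpres"
    and P :: "('c,'f,'x,'d,'g) curr" and Q :: "('d,'g,'y,'e,'h) curr"
  assumes cpP: "curr_pres C D P" and cpQ: "curr_pres D E Q"
begin

abbreviation PQ :: "'c \<Rightarrow> ('x \<times> 'y, 'e, 'h) inspres" where
  "PQ c \<equiv> cinst (ccomp D E P Q) c"

lemmas wfC = curr_pres_wf(1)[OF cpP] and wfD = curr_pres_wf(2)[OF cpP]
  and wfE = curr_pres_wf(2)[OF cpQ]
  and wfP = curr_pres_wf(3)[OF cpP] and wfQ = curr_pres_wf(3)[OF cpQ]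

lemma gsortP: "c \<in> sorts C \<Longrightarrow> x \<in> gens (cinst P c) \<Longrightarrow> gsort (cinst P c) x \<in> sorts D"
  using wfP by (auto simp: wf_inspres_def)

lemma ttypeP: "c \<in> sorts C \<Longrightarrow> valid_term D (cinst P c) s \<Longrightarrow> ttype D (cinst P c) s \<in> sorts D"
  using wfD by (auto simp: valid_term_def ttype_def valid_path_def intro: ptgt_in_sorts)

lemma ttypeQ: "d \<in> sorts D \<Longrightarrow> valid_term E (cinst Q d) t \<Longrightarrow> ttype E (cinst Q d) t \<in> sorts E"
  using wfE by (auto simp: valid_term_def ttype_def valid_path_def intro: ptgt_in_sorts)

lemma valid_genP: "c \<in> sorts C \<Longrightarrow> x \<in> gens (cinst P c) \<Longrightarrow> valid_term D (cinst P c) (x, [])"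
  using gsortP by (simp add: valid_term_gen)

lemma valid_genQ: "d \<in> sorts D \<Longrightarrow> q \<in> gens (cinst Q d) \<Longrightarrow> valid_term E (cinst Q d) (q, [])"
  using wfQ by (auto simp: valid_term_gen wf_inspres_def)

lemma tens_valid:
  assumes c: "c \<in> sorts C" and vs: "valid_term D (cinst P c) s"
    and vt: "valid_term E (cinst Q (ttype D (cinst P c) s)) t"
  shows "valid_term E (PQ c) (tens Q s t)"
    and "ttype E (PQ c) (tens Q s t) = ttype E (cinst Q (ttype D (cinst P c) s)) t"
proof -
  obtain x g where s: "s = (x, g)" by fastforce
  let ?d = "gsort (cinst P c) x"
  have x: "x \<in> gens (cinst P c)" "path_ok D ?d g" "?d \<in> sorts D"
    using vs s by (auto simp: valid_term_def valid_path_def)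
  have "ptgt D (?d, g) = ttype D (cinst P c) s" using s by (simp add: ttype_def)
  then have "valid_term E (cinst Q ?d) (apply_path Q g t)"
    "ttype E (cinst Q ?d) (apply_path Q g t) = ttype E (cinst Q (ttype D (cinst P c) s)) t"
    using apply_path_valid[OF cpQ x(3) x(2)] vt by simp_all
  moreover have "tens Q s t = ((x, fst (apply_path Q g t)), snd (apply_path Q g t))"
    using s by (simp add: tens_def Let_def)
  ultimately show "valid_term E (PQ c) (tens Q s t)"
    "ttype E (PQ c) (tens Q s t) = ttype E (cinst Q (ttype D (cinst P c) s)) t"
    using x by (auto simp: valid_term_def ccomp_gens ttype_def)
qed

lemma tens_teq_gen:
  assumes c: "c \<in> sorts C" and x: "x \<in> gens (cinst P c)"
    and "teq E (cinst Q (gsort (cinst P c) x)) t t'"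
  shows "teq E (PQ c) (tens Q (x, []) t) (tens Q (x, []) t')"
  using assms(3)
proof induction
  case (teq_eq t t')
  then show ?case using x by (auto intro: teq.teq_eq ccomp_ieqs_rightI)
next
  case (teq_refl t)
  then have "valid_term E (PQ c) (tens Q (x, []) t)"
    using tens_valid(1)[OF c valid_genP[OF c x]] by (simp add: ttype_def)
  then show ?case by (rule teq.teq_refl)
next
  case (teq_sym s t)
  then show ?case by (auto intro: teq.teq_sym)
next
  case (teq_trans s t u)
  then show ?case by (auto intro: teq.teq_trans)
next
  case (teq_right s t f)
  then have "teq E (PQ c) (fst (tens Q (x, []) s), snd (tens Q (x, []) s) @ [f])
      (fst (tens Q (x, []) t), snd (tens Q (x, []) t) @ [f])"
    by (intro teq.teq_right) (auto simp: tens_gen ttype_def)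
  then show ?case by (simp add: tens_extend_right)
next
  case (teq_ceq t p q)
  then have "teq E (PQ c) (fst (tens Q (x, []) t), snd (tens Q (x, []) t) @ snd p)
      (fst (tens Q (x, []) t), snd (tens Q (x, []) t) @ snd q)"
    using tens_valid(1)[OF c valid_genP[OF c x], of t]
    by (intro teq.teq_ceq) (auto simp: tens_gen ttype_def)
  then show ?case by (simp add: tens_extend_right)
qed

lemma tens_teq_right:
  assumes c: "c \<in> sorts C" and vs: "valid_term D (cinst P c) s"
    and tt: "teq E (cinst Q (ttype D (cinst P c) s)) t t'"
  shows "teq E (PQ c) (tens Q s t) (tens Q s t')"
proof -
  obtain x g where s: "s = (x, g)" by fastforce
  let ?d = "gsort (cinst P c) x"
  have x: "x \<in> gens (cinst P c)" "path_ok D ?d g" "?d \<in> sorts D"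
    using vs s by (auto simp: valid_term_def valid_path_def)
  have "ptgt D (?d, g) = ttype D (cinst P c) s" using s by (simp add: ttype_def)
  then have "teq E (cinst Q ?d) (apply_path Q g t) (apply_path Q g t')"
    using apply_path_teq[OF cpQ x(3) x(2)] tt by simp
  then show ?thesis using tens_teq_gen[OF c x(1)] tens_split[of Q s] s by (metis fst_conv snd_conv)
qed

lemma tens_teq_left:
  assumes c: "c \<in> sorts C" and ss: "teq D (cinst P c) s s'"
  shows "valid_term E (cinst Q (ttype D (cinst P c) s)) t \<Longrightarrow> teq E (PQ c) (tens Q s t) (tens Q s' t)"
  using ss
proof (induction arbitrary: t)
  note wfPc = wfP[OF c]
  {
    case (teq_eq s s')
    obtain q h where t: "t = (q, h)" by fastforce
    let ?d = "ttype D (cinst P c) s"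
    have q: "q \<in> gens (cinst Q ?d)" "path_ok E (gsort (cinst Q ?d) q) h"
      using teq_eq t by (auto simp: valid_term_def valid_path_def)
    have e: "teq E (PQ c) (tens Q s (q, [])) (tens Q s' (q, []))"
      using teq_eq q by (auto intro: teq.teq_eq ccomp_ieqs_leftI)
    have vs: "valid_term D (cinst P c) s" using teq_eq wfPc by (auto simp: wf_inspres_def)
    have "ttype E (PQ c) (tens Q s (q, [])) = gsort (cinst Q ?d) q"
      using tens_valid(2)[OF c vs valid_genQ[OF ttypeP[OF c vs] q(1)]] by (simp add: ttype_def)
    then show ?case
      using teq_append[OF e] q(2) t tens_extend_right[of Q s "(q, [])" h]
        tens_extend_right[of Q s' "(q, [])" h]
      by simp
  next
    case (teq_refl s)
    then show ?case using tens_valid(1)[OF c] by (blast intro: teq.teq_refl)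
  next
    case (teq_sym s s')
    then show ?case using teq_valid[OF wfD wfPc teq_sym(1)] by (metis teq.teq_sym)
  next
    case (teq_trans s s' s'')
    then show ?case using teq_valid[OF wfD wfPc teq_trans(1)] by (metis teq.teq_trans)
  next
    case (teq_right s s' f)
    note f = curr_pres_sym[OF cpQ teq_right(2)]
    have "ttype D (cinst P c) s = sdom D f" using teq_right by simp
    then have "valid_term E (cinst Q (ttype D (cinst P c) s)) (apply_path Q [f] t)"
      using inst_morph_valid[OF f(3)] teq_right.prems by simp
    then have "teq E (PQ c) (tens Q s (apply_path Q [f] t)) (tens Q s' (apply_path Q [f] t))"
      using teq_right by blast
    then show ?case by (simp only: tens_extend_left)
  next
    case (teq_ceq s p q)
    have "ttype D (cinst P c) (fst s, snd s @ snd p) = ptgt D p"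
      using ttype_append[of D "cinst P c" s "snd p"] teq_ceq by (metis prod.collapse)
    then have "teq E (cinst Q (fst p)) (apply_path Q (snd p) t) (apply_path Q (snd q) t)"
      using apply_path_peq[OF cpQ peq_eq[OF teq_ceq(2)]] teq_ceq by simp
    then have "teq E (PQ c) (tens Q s (apply_path Q (snd p) t)) (tens Q s (apply_path Q (snd q) t))"
      using tens_teq_right[OF c teq_ceq(1)] teq_ceq by simp
    then show ?case by (simp only: tens_extend_left)
  }
qed


lemma wf_inspres_ccomp:
  assumes c: "c \<in> sorts C"
  shows "wf_inspres E (PQ c)"
proof (rule wf_inspresI)
  fix w assume "w \<in> gens (PQ c)"
  then obtain x q where "w = (x, q)" "x \<in> gens (cinst P c)" "q \<in> gens (cinst Q (gsort (cinst P c) x))"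
    by (auto simp: ccomp_gens)
  then show "gsort (PQ c) w \<in> sorts E" using wfQ[OF gsortP[OF c]] by (auto simp: wf_inspres_def)
next
  fix w w' assume "(w, w') \<in> ieqs (PQ c)"
  then show "valid_term E (PQ c) w \<and> valid_term E (PQ c) w' \<and> ttype E (PQ c) w = ttype E (PQ c) w'"
  proof (cases rule: ccomp_ieqsE)
    case (left s s' q)
    then have v: "valid_term D (cinst P c) s" "valid_term D (cinst P c) s'"
      "ttype D (cinst P c) s = ttype D (cinst P c) s'"
      using wfP[OF c] by (auto simp: wf_inspres_def)
    have "valid_term E (cinst Q (ttype D (cinst P c) s)) (q, [])"
      using valid_genQ[OF ttypeP[OF c v(1)]] left by blast
    then show ?thesis using tens_valid[OF c v(1)] tens_valid[OF c v(2)] v(3) left by auto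
  next
    case (right x t t')
    then have "valid_term E (cinst Q (gsort (cinst P c) x)) t" "valid_term E (cinst Q (gsort (cinst P c) x)) t'"
      "ttype E (cinst Q (gsort (cinst P c) x)) t = ttype E (cinst Q (gsort (cinst P c) x)) t'"
      using wfQ[OF gsortP[OF c right(3)]] by (auto simp: wf_inspres_def)
    then show ?thesis using tens_valid[OF c valid_genP[OF c right(3)]] right by simp
  qed
qed

lemma ccomp_cmor_ieq:
  assumes f: "f \<in> syms C" and ww: "(w, w') \<in> ieqs (PQ (scod C f))"
  shows "teq E (PQ (sdom C f)) (tapp (cmor (ccomp D E P Q) f) w) (tapp (cmor (ccomp D E P Q) f) w')"
  using ww
proof (cases rule: ccomp_ieqsE)
  case (left s s' q)
  note sf = curr_pres_sym[OF cpP f]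
  have v: "valid_term D (cinst P (scod C f)) s" using wfP[OF sf(2)] left by (auto simp: wf_inspres_def)
  have "teq D (cinst P (sdom C f)) (tapp (cmor P f) s) (tapp (cmor P f) s')"
    using sf(3) left by (auto simp: inst_morph_def)
  moreover have "valid_term E (cinst Q (ttype D (cinst P (sdom C f)) (tapp (cmor P f) s))) (q, [])"
    using valid_genQ[OF ttypeP[OF sf(2) v]] inst_morph_valid[OF sf(3) v] left by simp
  ultimately show ?thesis using tens_teq_left[OF sf(1)] left by (simp add: ccomp_tapp)
next
  case (right x t t')
  note sf = curr_pres_sym[OF cpP f]
  have "valid_term D (cinst P (sdom C f)) (tapp (cmor P f) (x, []))"
    "ttype D (cinst P (sdom C f)) (tapp (cmor P f) (x, [])) = gsort (cinst P (scod C f)) x"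
    using inst_morph_valid[OF sf(3) valid_genP[OF sf(2) right(3)]] by auto
  moreover have "teq E (cinst Q (gsort (cinst P (scod C f)) x)) t t'" using right by (auto intro: teq_eq)
  ultimately show ?thesis using tens_teq_right[OF sf(1)] right by (simp add: ccomp_tapp)
qed

lemma inst_morph_ccomp_cmor:
  assumes f: "f \<in> syms C"
  shows "inst_morph E (PQ (scod C f)) (PQ (sdom C f)) (cmor (ccomp D E P Q) f)"
proof (rule inst_morphI)
  note sf = curr_pres_sym[OF cpP f]
  fix w assume "w \<in> gens (PQ (scod C f))"
  then obtain x q where w: "w = (x, q)" "x \<in> gens (cinst P (scod C f))"
    "q \<in> gens (cinst Q (gsort (cinst P (scod C f)) x))"
    by (auto simp: ccomp_gens)
  have "valid_term D (cinst P (sdom C f)) (tapp (cmor P f) (x, []))"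
    "ttype D (cinst P (sdom C f)) (tapp (cmor P f) (x, [])) = gsort (cinst P (scod C f)) x"
    using inst_morph_valid[OF sf(3) valid_genP[OF sf(2) w(2)]] by auto
  moreover have "cmor (ccomp D E P Q) f w = tens Q (tapp (cmor P f) (x, [])) (q, [])"
    using w by (simp add: tapp_def)
  ultimately show "valid_term E (PQ (sdom C f)) (cmor (ccomp D E P Q) f w)
      \<and> ttype E (PQ (sdom C f)) (cmor (ccomp D E P Q) f w) = gsort (PQ (scod C f)) w"
    using tens_valid[OF sf(1)] valid_genQ[OF gsortP[OF sf(2) w(2)] w(3)] w by auto
qed (rule ccomp_cmor_ieq[OF f])

lemma morph_eq_ccomp_ceq:
  assumes "(p, p') \<in> ceqs C"
  shows "morph_eq E (PQ (ptgt C p)) (PQ (fst p))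
    (\<lambda>x. apply_path (ccomp D E P Q) (snd p) (x, [])) (\<lambda>x. apply_path (ccomp D E P Q) (snd p') (x, []))"
  unfolding morph_eq_def
proof
  have vp: "valid_path C p" using wfC assms by (auto simp: wf_catpres_def)
  then have sp: "fst p \<in> sorts C" "ptgt C p \<in> sorts C" using valid_path_sorts[OF wfC] by auto
  fix w assume "w \<in> gens (PQ (ptgt C p))"
  then obtain x q where w: "w = (x, q)" "x \<in> gens (cinst P (ptgt C p))"
    "q \<in> gens (cinst Q (gsort (cinst P (ptgt C p)) x))"
    by (auto simp: ccomp_gens)
  have vx: "valid_term D (cinst P (ptgt C p)) (x, [])" using valid_genP[OF sp(2) w(2)] .
  have "teq D (cinst P (fst p)) (apply_path P (snd p) (x, [])) (apply_path P (snd p') (x, []))"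
    using apply_path_peq[OF cpP peq_eq[OF assms] vx] .
  moreover have "ttype D (cinst P (fst p)) (apply_path P (snd p) (x, [])) = gsort (cinst P (ptgt C p)) x"
    using apply_path_valid[OF cpP sp(1), of "snd p" "(x, [])"] vp vx by (simp add: valid_path_def)
  moreover have "(w, []) = tens Q (x, []) (q, [])" using w by (simp add: tens_gen)
  ultimately show "teq E (PQ (fst p)) (apply_path (ccomp D E P Q) (snd p) (w, []))
      (apply_path (ccomp D E P Q) (snd p') (w, []))"
    using tens_teq_left[OF sp(1)] valid_genQ[OF gsortP[OF sp(2) w(2)] w(3)]
    by (simp add: apply_path_ccomp)
qed

lemma curr_pres_ccomp: "curr_pres C E (ccomp D E P Q)"
  unfolding curr_pres_def
  using wfC wfE wf_inspres_ccomp inst_morph_ccomp_cmor morph_eq_ccomp_ceq by auto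


abbreviation "cC \<equiv> sem_cat C"
abbreviation "cD \<equiv> sem_cat D"
abbreviation "cE \<equiv> sem_cat E"
abbreviation "SP \<equiv> sem_curr C D P"
abbreviation "SQ \<equiv> sem_curr D E Q"
abbreviation "SPQ \<equiv> sem_curr C E (ccomp D E P Q)"
abbreviation "K c e \<equiv> coend_carrier cD SP SQ c e"
abbreviation "cls c e \<equiv> coend_class cC cD cE SP SQ c e"
abbreviation "gen c e \<equiv> coend_gen cC cD cE SP SQ c e"

definition mu_rep :: "'c \<Rightarrow> 'd \<times> ('x \<times> 'g list) set \<times> ('y \<times> 'h list) set \<Rightarrow> (('x \<times> 'y) \<times> 'h list) set" where
  "mu_rep c u = (case u of (d, S, T) \<Rightarrow> tclass E (PQ c) (tens Q (rep S) (rep T)))"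

lemma mu_eq_mu_rep: "mu D E P Q c e X = mu_rep c (rep X)"
  by (simp add: mu_def mu_rep_def)

lemma coend_carrierE:
  assumes "c \<in> sorts C" "(d, S, T) \<in> K c e"
  obtains s t where "valid_term D (cinst P c) s" "ttype D (cinst P c) s = d" "S = tclass D (cinst P c) s"
    "valid_term E (cinst Q d) t" "ttype E (cinst Q d) t = e" "T = tclass E (cinst Q d) t" "d \<in> sorts D"
  using assms by (auto simp: coend_carrier_iff pobj_sem_curr)

lemma coend_carrierI:
  assumes "c \<in> sorts C" "valid_term D (cinst P c) s" "valid_term E (cinst Q (ttype D (cinst P c) s)) t"
  shows "(ttype D (cinst P c) s, tclass D (cinst P c) s, tclass E (cinst Q (ttype D (cinst P c) s)) t)
    \<in> K c (ttype E (cinst Q (ttype D (cinst P c) s)) t)"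
  unfolding coend_carrier_iff pobj_sem_curr sem_cat_simps using assms ttypeP[OF assms(1,2)] by blast

lemma mu_rep_classes:
  assumes c: "c \<in> sorts C" and vs: "valid_term D (cinst P c) s"
    and vt: "valid_term E (cinst Q (ttype D (cinst P c) s)) t"
  shows "mu_rep c (ttype D (cinst P c) s, tclass D (cinst P c) s, tclass E (cinst Q (ttype D (cinst P c) s)) t)
    = tclass E (PQ c) (tens Q s t)"
proof -
  let ?s' = "rep (tclass D (cinst P c) s)" and ?t' = "rep (tclass E (cinst Q (ttype D (cinst P c) s)) t)"
  have "teq E (PQ c) (tens Q ?s' ?t') (tens Q s ?t')"
    using tens_teq_left[OF c teq_rep_tclass[OF vs]] rep_tclass[OF wfD wfP[OF c] vs]
      rep_tclass(1)[OF wfE wfQ[OF ttypeP[OF c vs]] vt]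
    by simp
  also have "teq E (PQ c) (tens Q s ?t') (tens Q s t)"
    using tens_teq_right[OF c vs teq_rep_tclass[OF vt]] .
  finally show ?thesis unfolding mu_rep_def by (simp add: tclass_eq)
qed

lemma pmor_SQ_path:
  assumes "valid_path D g" "valid_term E (cinst Q (ptgt D g)) t"
  shows "pmor SQ (pclass D g) (c_id cE (ttype E (cinst Q (ptgt D g)) t)) (tclass E (cinst Q (ptgt D g)) t)
    = tclass E (cinst Q (fst g)) (apply_path Q (snd g) t)"
proof -
  have "ptgt D g \<in> sorts D" using valid_path_sorts[OF wfD assms(1)] by auto
  then have "valid_path E (ttype E (cinst Q (ptgt D g)) t, [])"
    using ttypeQ assms(2) by (simp add: valid_path_def)
  from pmor_sem_curr(1)[OF cpQ assms(1) this assms(2)] show ?thesis by simp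
qed

lemma pmor_SP_path:
  assumes "c \<in> sorts C" "valid_path D g" "valid_term D (cinst P c) s" "ttype D (cinst P c) s = fst g"
  shows "pmor SP (c_id cC c) (pclass D g) (tclass D (cinst P c) s) = tclass D (cinst P c) (fst s, snd s @ snd g)"
proof -
  have "valid_path C (c, [])" using assms(1) by (simp add: valid_path_def)
  from pmor_sem_curr(1)[OF cpP this assms(2)] assms(3,4) show ?thesis by simp
qed

text \<open>Every generating step of the coend relation moves a path \<open>g\<close> of \<open>D\<close> from the \<open>Q\<close>-term to the
  \<open>P\<close>-term.\<close>

lemma coend_gen_pathI:
  assumes c: "c \<in> sorts C" and g: "valid_path D g" and vs: "valid_term D (cinst P c) s"
    and ty: "ttype D (cinst P c) s = fst g" and vt: "valid_term E (cinst Q (ptgt D g)) t"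
  shows "gen c (ttype E (cinst Q (ptgt D g)) t)
    (fst g, tclass D (cinst P c) s, tclass E (cinst Q (fst g)) (apply_path Q (snd g) t))
    (ptgt D g, tclass D (cinst P c) (fst s, snd s @ snd g), tclass E (cinst Q (ptgt D g)) t)"
  unfolding coend_gen_def
proof (intro bexI)
  have d: "c_dom cD (pclass D g) = fst g" "c_cod cD (pclass D g) = ptgt D g"
    using sem_cat_dom[OF wfD g] sem_cat_cod[OF wfD g] by auto
  show "pclass D g \<in> c_mor cD" using g by (simp only: sem_cat_simps) blast
  show "tclass D (cinst P c) s \<in> pobj SP c (c_dom cD (pclass D g))"
    unfolding pobj_sem_curr d using vs ty by blast
  show "tclass E (cinst Q (ptgt D g)) t \<in> pobj SQ (c_cod cD (pclass D g)) (ttype E (cinst Q (ptgt D g)) t)"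
    unfolding pobj_sem_curr d using vt by blast
  show "(fst g, tclass D (cinst P c) s, tclass E (cinst Q (fst g)) (apply_path Q (snd g) t)) =
      (c_dom cD (pclass D g), tclass D (cinst P c) s,
       pmor SQ (pclass D g) (c_id cE (ttype E (cinst Q (ptgt D g)) t)) (tclass E (cinst Q (ptgt D g)) t)) \<and>
    (ptgt D g, tclass D (cinst P c) (fst s, snd s @ snd g), tclass E (cinst Q (ptgt D g)) t) =
      (c_cod cD (pclass D g), pmor SP (c_id cC c) (pclass D g) (tclass D (cinst P c) s),
       tclass E (cinst Q (ptgt D g)) t)"
    using d pmor_SQ_path[OF g vt] pmor_SP_path[OF c g vs ty] by simp
qed

lemma coend_gen_pathE:
  assumes c: "c \<in> sorts C" and "gen c e u v"
  obtains g s t where "valid_path D g" "valid_term D (cinst P c) s" "ttype D (cinst P c) s = fst g"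
    "valid_term E (cinst Q (ptgt D g)) t" "ttype E (cinst Q (ptgt D g)) t = e"
    "u = (fst g, tclass D (cinst P c) s, tclass E (cinst Q (fst g)) (apply_path Q (snd g) t))"
    "v = (ptgt D g, tclass D (cinst P c) (fst s, snd s @ snd g), tclass E (cinst Q (ptgt D g)) t)"
proof -
  from assms(2) obtain G S T where G: "G \<in> c_mor cD" "S \<in> pobj SP c (c_dom cD G)" "T \<in> pobj SQ (c_cod cD G) e"
    "u = (c_dom cD G, S, pmor SQ G (c_id cE e) T)" "v = (c_cod cD G, pmor SP (c_id cC c) G S, T)"
    unfolding coend_gen_def by blast
  from G(1) obtain g where g: "valid_path D g" "G = pclass D g" by auto
  have d: "c_dom cD G = fst g" "c_cod cD G = ptgt D g"
    using sem_cat_dom[OF wfD g(1)] sem_cat_cod[OF wfD g(1)] g(2) by auto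
  from G(2) d obtain s where s: "valid_term D (cinst P c) s" "ttype D (cinst P c) s = fst g"
    "S = tclass D (cinst P c) s"
    by (auto simp: pobj_sem_curr)
  from G(3) d obtain t where t: "valid_term E (cinst Q (ptgt D g)) t" "ttype E (cinst Q (ptgt D g)) t = e"
    "T = tclass E (cinst Q (ptgt D g)) t"
    by (auto simp: pobj_sem_curr)
  show thesis
    using that[OF g(1) s(1,2) t(1,2)] G(4,5) d g(2) s t pmor_SQ_path[OF g(1) t(1)] pmor_SP_path[OF c g(1) s(1,2)]
    by auto
qed

lemma mu_rep_coend_gen:
  assumes c: "c \<in> sorts C" and "gen c e u v"
  shows "mu_rep c u = mu_rep c v"
proof -
  obtain g s t where h: "valid_path D g" "valid_term D (cinst P c) s" "ttype D (cinst P c) s = fst g"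
    "valid_term E (cinst Q (ptgt D g)) t" "ttype E (cinst Q (ptgt D g)) t = e"
    "u = (fst g, tclass D (cinst P c) s, tclass E (cinst Q (fst g)) (apply_path Q (snd g) t))"
    "v = (ptgt D g, tclass D (cinst P c) (fst s, snd s @ snd g), tclass E (cinst Q (ptgt D g)) t)"
    using coend_gen_pathE[OF assms] .
  have g: "path_ok D (fst g) (snd g)" "fst g \<in> sorts D" using h(1) by (auto simp: valid_path_def)
  have "valid_term E (cinst Q (fst g)) (apply_path Q (snd g) t)"
    using apply_path_valid[OF cpQ g(2,1)] h(4) by simp
  then have "mu_rep c u = tclass E (PQ c) (tens Q s (apply_path Q (snd g) t))"
    using mu_rep_classes[OF c h(2)] h(3,6) by simp
  moreover have s': "valid_term D (cinst P c) (fst s, snd s @ snd g)"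
    "ttype D (cinst P c) (fst s, snd s @ snd g) = ptgt D g"
    using valid_term_append[OF h(2), of "snd g"] ttype_append[of D "cinst P c" s "snd g"] h(3) g(1)
    by auto
  then have "mu_rep c v = tclass E (PQ c) (tens Q (fst s, snd s @ snd g) t)"
    using mu_rep_classes[OF c s'(1)] h(4,7) by simp
  ultimately show ?thesis by (simp add: tens_extend_left)
qed

lemma mu_coend_class:
  assumes c: "c \<in> sorts C" and u: "u \<in> K c e"
  shows "mu D E P Q c e (cls c e u) = mu_rep c u"
  unfolding mu_eq_mu_rep
  using equivclp_invariant[of "gen c e" "mu_rep c", OF mu_rep_coend_gen[OF c] rep_coend_class(2)[OF u]]
  by simp

lemma mu_class:
  assumes c: "c \<in> sorts C" and vs: "valid_term D (cinst P c) s"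
    and vt: "valid_term E (cinst Q (ttype D (cinst P c) s)) t"
  shows "mu D E P Q c (ttype E (cinst Q (ttype D (cinst P c) s)) t)
      (cls c (ttype E (cinst Q (ttype D (cinst P c) s)) t)
        (ttype D (cinst P c) s, tclass D (cinst P c) s, tclass E (cinst Q (ttype D (cinst P c) s)) t))
    = tclass E (PQ c) (tens Q s t)"
  using mu_coend_class[OF c coend_carrierI[OF c vs vt]] mu_rep_classes[OF c vs vt] by simp

lemma pobj_prof_compE:
  assumes c: "c \<in> sorts C" and X: "X \<in> pobj (prof_comp cC cD cE SP SQ) c e"
  obtains s t where "valid_term D (cinst P c) s" "valid_term E (cinst Q (ttype D (cinst P c) s)) t"
    "ttype E (cinst Q (ttype D (cinst P c) s)) t = e"
    "rep X = (ttype D (cinst P c) s, tclass D (cinst P c) s, tclass E (cinst Q (ttype D (cinst P c) s)) t)"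
    "X = cls c e (rep X)" "mu D E P Q c e X = tclass E (PQ c) (tens Q s t)"
proof -
  have r: "rep X \<in> K c e" "X = cls c e (rep X)" using pobj_prof_comp_rep[OF X] by auto
  obtain d S T where dST: "rep X = (d, S, T)" by (metis prod.collapse)
  from coend_carrierE[OF c r(1)[unfolded dST]] obtain s t where st:
    "valid_term D (cinst P c) s" "ttype D (cinst P c) s = d" "S = tclass D (cinst P c) s"
    "valid_term E (cinst Q d) t" "ttype E (cinst Q d) t = e" "T = tclass E (cinst Q d) t"
    by metis
  have "mu D E P Q c e X = tclass E (PQ c) (tens Q s t)"
    using mu_rep_classes[OF c st(1)] st dST by (simp add: mu_eq_mu_rep)
  then show thesis using that[of s t] st dST r by simp
qed

lemma mu_in_pobj:
  assumes c: "c \<in> sorts C" and X: "X \<in> pobj (prof_comp cC cD cE SP SQ) c e"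
  shows "mu D E P Q c e X \<in> pobj SPQ c e"
proof -
  obtain s t where st: "valid_term D (cinst P c) s" "valid_term E (cinst Q (ttype D (cinst P c) s)) t"
    "ttype E (cinst Q (ttype D (cinst P c) s)) t = e" "mu D E P Q c e X = tclass E (PQ c) (tens Q s t)"
    using pobj_prof_compE[OF c X] by metis
  moreover have "valid_term E (PQ c) (tens Q s t)" "ttype E (PQ c) (tens Q s t) = e"
    using tens_valid[OF c st(1,2)] st(3) by auto
  ultimately show ?thesis unfolding pobj_sem_curr by blast
qed


definition split_term :: "'c \<Rightarrow> ('x \<times> 'y) \<times> 'h list \<Rightarrow> 'd \<times> ('x \<times> 'g list) set \<times> ('y \<times> 'h list) set" where
  "split_term c w = (gsort (cinst P c) (fst (fst w)), tclass D (cinst P c) (fst (fst w), []),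
     tclass E (cinst Q (gsort (cinst P c) (fst (fst w)))) (snd (fst w), snd w))"

definition mu_inv :: "'c \<Rightarrow> 'e \<Rightarrow> ('x \<times> 'y) \<times> 'h list \<Rightarrow> ('d \<times> ('x \<times> 'g list) set \<times> ('y \<times> 'h list) set) set" where
  "mu_inv c e w = cls c e (split_term c w)"

definition act_right :: "'h \<Rightarrow> 'd \<times> ('x \<times> 'g list) set \<times> ('y \<times> 'h list) set \<Rightarrow> 'd \<times> ('x \<times> 'g list) set \<times> ('y \<times> 'h list) set" where
  "act_right f u = (case u of (d, S, T) \<Rightarrow> (d, S, tclass E (cinst Q d) (fst (rep T), snd (rep T) @ [f])))"

lemma split_term_carrier:
  assumes c: "c \<in> sorts C" and w: "valid_term E (PQ c) w"
  shows "split_term c w \<in> K c (ttype E (PQ c) w)" and "mu_rep c (split_term c w) = tclass E (PQ c) w"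
proof -
  obtain x q h where ww: "w = ((x, q), h)" by (metis prod.collapse)
  then have x: "x \<in> gens (cinst P c)" "valid_term E (cinst Q (gsort (cinst P c) x)) (q, h)"
    using w by (auto simp: valid_term_def ccomp_gens valid_path_def)
  have "ttype E (PQ c) w = ttype E (cinst Q (gsort (cinst P c) x)) (q, h)" using ww by (simp add: ttype_def)
  then show "split_term c w \<in> K c (ttype E (PQ c) w)"
    using coend_carrierI[OF c valid_genP[OF c x(1)], of "(q, h)"] x(2) ww by (simp add: split_term_def)
  show "mu_rep c (split_term c w) = tclass E (PQ c) w"
    using mu_rep_classes[OF c valid_genP[OF c x(1)]] x(2) ww by (simp add: split_term_def tens_gen)
qed

lemma mu_inv_tens:
  assumes c: "c \<in> sorts C" and vs: "valid_term D (cinst P c) s"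
    and vt: "valid_term E (cinst Q (ttype D (cinst P c) s)) t"
  shows "mu_inv c (ttype E (cinst Q (ttype D (cinst P c) s)) t) (tens Q s t)
    = cls c (ttype E (cinst Q (ttype D (cinst P c) s)) t)
        (ttype D (cinst P c) s, tclass D (cinst P c) s, tclass E (cinst Q (ttype D (cinst P c) s)) t)"
proof -
  obtain x g where s: "s = (x, g)" by fastforce
  let ?g = "(gsort (cinst P c) x, g)"
  have x: "x \<in> gens (cinst P c)" "valid_path D ?g" using vs s by (auto simp: valid_term_def)
  have "ptgt D ?g = ttype D (cinst P c) s" using s by (simp add: ttype_def)
  then have "gen c (ttype E (cinst Q (ttype D (cinst P c) s)) t) (split_term c (tens Q s t))
      (ttype D (cinst P c) s, tclass D (cinst P c) s, tclass E (cinst Q (ttype D (cinst P c) s)) t)"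
    using coend_gen_pathI[OF c x(2) valid_genP[OF c x(1)]] vt s
    by (simp add: split_term_def tens_def Let_def)
  then show ?thesis unfolding mu_inv_def by (intro coend_class_eq r_into_equivclp)
qed

lemma act_right_coend_gen:
  assumes c: "c \<in> sorts C" and f: "f \<in> syms E" and "gen c (sdom E f) u v"
  shows "gen c (scod E f) (act_right f u) (act_right f v)"
proof -
  obtain g s t where h: "valid_path D g" "valid_term D (cinst P c) s" "ttype D (cinst P c) s = fst g"
    "valid_term E (cinst Q (ptgt D g)) t" "ttype E (cinst Q (ptgt D g)) t = sdom E f"
    "u = (fst g, tclass D (cinst P c) s, tclass E (cinst Q (fst g)) (apply_path Q (snd g) t))"
    "v = (ptgt D g, tclass D (cinst P c) (fst s, snd s @ snd g), tclass E (cinst Q (ptgt D g)) t)"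
    using coend_gen_pathE[OF c assms(3)] .
  have g: "path_ok D (fst g) (snd g)" "fst g \<in> sorts D" "ptgt D g \<in> sorts D"
    using h(1) valid_path_sorts[OF wfD h(1)] by (auto simp: valid_path_def)
  let ?a = "apply_path Q (snd g) t"
  have a: "valid_term E (cinst Q (fst g)) ?a" "ttype E (cinst Q (fst g)) ?a = sdom E f"
    using apply_path_valid[OF cpQ g(2,1)] h(4,5) by auto
  have f': "path_ok E (sdom E f) [f]" using f by simp
  have "gen c (scod E f)
      (fst g, tclass D (cinst P c) s, tclass E (cinst Q (fst g)) (apply_path Q (snd g) (fst t, snd t @ [f])))
      (ptgt D g, tclass D (cinst P c) (fst s, snd s @ snd g), tclass E (cinst Q (ptgt D g)) (fst t, snd t @ [f]))"
    using coend_gen_pathI[OF c h(1-3), of "(fst t, snd t @ [f])"] valid_term_append[OF h(4)] h(5) f'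
    by simp
  then show ?thesis
    using h(6,7) tclass_rep_append[OF wfE wfQ[OF g(2)] a(1)] tclass_rep_append[OF wfE wfQ[OF g(3)] h(4)]
      a(2) h(5) f'
    by (simp add: act_right_def apply_path_extend)
qed

lemma split_term_snoc:
  assumes c: "c \<in> sorts C" and f: "f \<in> syms E"
    and z: "valid_term E (PQ c) z" "ttype E (PQ c) z = sdom E f"
  shows "act_right f (split_term c z) = split_term c (fst z, snd z @ [f])"
proof -
  obtain x q h where zz: "z = ((x, q), h)" by (metis prod.collapse)
  let ?d = "gsort (cinst P c) x"
  have x: "x \<in> gens (cinst P c)" "valid_term E (cinst Q ?d) (q, h)" "ttype E (cinst Q ?d) (q, h) = sdom E f"
    using z zz by (auto simp: valid_term_def ccomp_gens valid_path_def ttype_def)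
  then show ?thesis
    using tclass_rep_append[OF wfE wfQ[OF gsortP[OF c x(1)]] x(2), of "[f]"] f zz
    by (simp add: act_right_def split_term_def)
qed

lemma mu_inv_snoc:
  assumes c: "c \<in> sorts C" and f: "f \<in> syms E"
    and w: "valid_term E (PQ c) w" "valid_term E (PQ c) w'" "ttype E (PQ c) w = sdom E f"
      "ttype E (PQ c) w' = sdom E f"
    and eq: "mu_inv c (sdom E f) w = mu_inv c (sdom E f) w'"
  shows "mu_inv c (scod E f) (fst w, snd w @ [f]) = mu_inv c (scod E f) (fst w', snd w' @ [f])"
proof -
  have "equivclp (gen c (sdom E f)) (split_term c w) (split_term c w')"
    using coend_class_eqD[OF split_term_carrier(1)[OF c w(2)]] eq w(4) unfolding mu_inv_def by simp
  then have "equivclp (gen c (scod E f)) (act_right f (split_term c w)) (act_right f (split_term c w'))"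
    by (rule equivclp_map[rotated]) (rule act_right_coend_gen[OF c f])
  then show ?thesis
    unfolding mu_inv_def split_term_snoc[OF c f w(1,3)] split_term_snoc[OF c f w(2,4)]
    by (rule coend_class_eq)
qed

lemma mu_inv_ieq:
  assumes c: "c \<in> sorts C" and ww: "(w, w') \<in> ieqs (PQ c)"
  shows "mu_inv c (ttype E (PQ c) w) w = mu_inv c (ttype E (PQ c) w) w'"
  using ww
proof (cases rule: ccomp_ieqsE)
  case (left s s' q)
  then have v: "valid_term D (cinst P c) s" "valid_term D (cinst P c) s'"
    "ttype D (cinst P c) s = ttype D (cinst P c) s'"
    using wfP[OF c] by (auto simp: wf_inspres_def)
  have vq: "valid_term E (cinst Q (ttype D (cinst P c) s)) (q, [])"
    using valid_genQ[OF ttypeP[OF c v(1)]] left by blast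
  moreover have vq': "valid_term E (cinst Q (ttype D (cinst P c) s')) (q, [])" using vq v(3) by simp
  moreover have "tclass D (cinst P c) s = tclass D (cinst P c) s'"
    using left(3) by (intro tclass_eq teq.teq_eq)
  ultimately show ?thesis
    using mu_inv_tens[OF c v(1) vq] mu_inv_tens[OF c v(2) vq'] tens_valid(2)[OF c v(1) vq] v(3) left
    by simp
next
  case (right x t t')
  let ?d = "gsort (cinst P c) x"
  have vt: "valid_term E (cinst Q ?d) t" "valid_term E (cinst Q ?d) t'"
    "ttype E (cinst Q ?d) t = ttype E (cinst Q ?d) t'"
    using wfQ[OF gsortP[OF c right(3)]] right by (auto simp: wf_inspres_def)
  have "tclass E (cinst Q ?d) t = tclass E (cinst Q ?d) t'"
    using right(4) by (intro tclass_eq teq.teq_eq)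
  then show ?thesis
    using mu_inv_tens[OF c valid_genP[OF c right(3)], of t] mu_inv_tens[OF c valid_genP[OF c right(3)], of t']
      tens_valid(2)[OF c valid_genP[OF c right(3)], of t] vt right
    by simp
qed

lemma mu_inv_teq:
  assumes c: "c \<in> sorts C" and "teq E (PQ c) w w'"
  shows "mu_inv c (ttype E (PQ c) w) w = mu_inv c (ttype E (PQ c) w) w'"
  using assms(2)
proof induction
  case (teq_eq w w')
  then show ?case by (rule mu_inv_ieq[OF c])
next
  case (teq_refl w)
  then show ?case by simp
next
  case (teq_sym w w')
  then show ?case using teq_valid[OF wfE wf_inspres_ccomp[OF c] teq_sym(1)] by simp
next
  case (teq_trans w w' w'')
  then show ?case using teq_valid[OF wfE wf_inspres_ccomp[OF c] teq_trans(1)] by simp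
next
  case (teq_right w w' f)
  then show ?case using mu_inv_snoc[OF c] teq_valid[OF wfE wf_inspres_ccomp[OF c] teq_right(1)] by simp
next
  case (teq_ceq z p q)
  obtain x q0 h where zz: "z = ((x, q0), h)" by (metis prod.collapse)
  have x: "valid_term E (cinst Q (gsort (cinst P c) x)) (q0, h)"
    "ttype E (cinst Q (gsort (cinst P c) x)) (q0, h) = fst p"
    using teq_ceq zz by (auto simp: valid_term_def ccomp_gens valid_path_def ttype_def)
  have "teq E (cinst Q (gsort (cinst P c) x)) (q0, h @ snd p) (q0, h @ snd q)"
    using teq.teq_ceq[OF x(1) teq_ceq(2) x(2)[symmetric]] by simp
  then show ?case using zz by (simp add: mu_inv_def split_term_def tclass_eq)
qed

lemma mu_inv_in_pobj:
  assumes c: "c \<in> sorts C" and U: "U \<in> pobj SPQ c e"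
  shows "mu_inv c e (rep U) \<in> pobj (prof_comp cC cD cE SP SQ) c e"
    and "mu D E P Q c e (mu_inv c e (rep U)) = U"
proof -
  from U obtain w where w: "valid_term E (PQ c) w" "ttype E (PQ c) w = e" "U = tclass E (PQ c) w"
    by (auto simp: pobj_sem_curr)
  have v: "valid_term E (PQ c) (rep U)" "ttype E (PQ c) (rep U) = e"
    using rep_tclass[OF wfE wf_inspres_ccomp[OF c] w(1)] w by auto
  have K: "split_term c (rep U) \<in> K c e" using split_term_carrier(1)[OF c v(1)] v(2) by simp
  then show "mu_inv c e (rep U) \<in> pobj (prof_comp cC cD cE SP SQ) c e"
    unfolding mu_inv_def pobj_prof_comp by blast
  have "mu D E P Q c e (mu_inv c e (rep U)) = tclass E (PQ c) (rep U)"
    unfolding mu_inv_def using mu_coend_class[OF c K] split_term_carrier(2)[OF c v(1)] by simp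
  also have "\<dots> = U" using w(3) teq_rep_tclass[OF w(1)] tclass_eq by metis
  finally show "mu D E P Q c e (mu_inv c e (rep U)) = U" .
qed

lemma mu_inv_mu:
  assumes c: "c \<in> sorts C" and X: "X \<in> pobj (prof_comp cC cD cE SP SQ) c e"
  shows "mu_inv c e (rep (mu D E P Q c e X)) = X"
proof -
  obtain s t where st: "valid_term D (cinst P c) s" "valid_term E (cinst Q (ttype D (cinst P c) s)) t"
    "ttype E (cinst Q (ttype D (cinst P c) s)) t = e"
    "rep X = (ttype D (cinst P c) s, tclass D (cinst P c) s, tclass E (cinst Q (ttype D (cinst P c) s)) t)"
    "X = cls c e (rep X)" "mu D E P Q c e X = tclass E (PQ c) (tens Q s t)"
    using pobj_prof_compE[OF c X] by metis
  have v: "valid_term E (PQ c) (tens Q s t)" "ttype E (PQ c) (tens Q s t) = e"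
    using tens_valid[OF c st(1,2)] st(3) by auto
  have "mu_inv c e (rep (tclass E (PQ c) (tens Q s t))) = mu_inv c e (tens Q s t)"
    using mu_inv_teq[OF c teq_rep_tclass[OF v(1)]] rep_tclass(2)[OF wfE wf_inspres_ccomp[OF c] v(1)] v(2)
    by simp
  also have "\<dots> = X" using mu_inv_tens[OF c st(1,2)] st(3-5) by simp
  finally show ?thesis using st(6) by simp
qed


abbreviation "act_triple \<equiv> coend_act cD SP SQ"

lemma mu_rep_coend_act:
  assumes f: "f \<in> c_mor cC" and h: "h \<in> c_mor cE" and u: "u \<in> K (c_cod cC f) (c_dom cE h)"
  shows "act_triple f h u \<in> K (c_dom cC f) (c_cod cE h)"
    and "mu_rep (c_dom cC f) (act_triple f h u) = pmor SPQ f h (mu_rep (c_cod cC f) u)"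
proof -
  from f obtain pf where pf: "valid_path C pf" "f = pclass C pf" by auto
  from h obtain ph where ph: "valid_path E ph" "h = pclass E ph" by auto
  have fd: "c_dom cC f = fst pf" "c_cod cC f = ptgt C pf"
    using pf sem_cat_dom[OF wfC] sem_cat_cod[OF wfC] by auto
  have hd: "c_dom cE h = fst ph" "c_cod cE h = ptgt E ph"
    using ph sem_cat_dom[OF wfE] sem_cat_cod[OF wfE] by auto
  have c: "fst pf \<in> sorts C" "ptgt C pf \<in> sorts C" using valid_path_sorts[OF wfC pf(1)] by auto
  obtain b S T where u3: "u = (b, S, T)" by (metis prod.collapse)
  obtain s t where st: "valid_term D (cinst P (ptgt C pf)) s" "ttype D (cinst P (ptgt C pf)) s = b"
    "S = tclass D (cinst P (ptgt C pf)) s" "valid_term E (cinst Q b) t" "ttype E (cinst Q b) t = fst ph"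
    "T = tclass E (cinst Q b) t" "b \<in> sorts D"
    using coend_carrierE[OF c(2), of b S T "fst ph"] u u3 fd hd by metis
  have vb: "valid_path D (b, [])" using st(7) by (simp add: valid_path_def)
  let ?s = "apply_path P (snd pf) s" and ?t = "(fst t, snd t @ snd ph)"
  have ps: "pmor SP f (c_id cD b) S = tclass D (cinst P (fst pf)) ?s"
    "valid_term D (cinst P (fst pf)) ?s" "ttype D (cinst P (fst pf)) ?s = b"
    using pmor_sem_curr[OF cpP pf(1) vb st(1)] pf(2) st(2,3) by auto
  have pt: "pmor SQ (c_id cD b) h T = tclass E (cinst Q b) ?t"
    "valid_term E (cinst Q b) ?t" "ttype E (cinst Q b) ?t = ptgt E ph"
    using pmor_sem_curr[OF cpQ vb ph(1), of t] st(4,5,6) ph(2) by auto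
  have au: "act_triple f h u = (b, tclass D (cinst P (fst pf)) ?s, tclass E (cinst Q b) ?t)"
    unfolding coend_act_def u3 using ps(1) pt(1) by simp
  show "act_triple f h u \<in> K (c_dom cC f) (c_cod cE h)"
    unfolding au fd hd using coend_carrierI[OF c(1) ps(2), of ?t] ps(3) pt(2,3) by simp
  have "mu_rep (c_dom cC f) (act_triple f h u) = tclass E (PQ (fst pf)) (tens Q ?s ?t)"
    unfolding au fd using mu_rep_classes[OF c(1) ps(2), of ?t] ps(3) pt(2) by simp
  moreover have "mu_rep (c_cod cC f) u = tclass E (PQ (ptgt C pf)) (tens Q s t)"
    unfolding fd u3 using mu_rep_classes[OF c(2) st(1), of t] st by simp
  moreover have "pmor SPQ f h (tclass E (PQ (ptgt C pf)) (tens Q s t)) = tclass E (PQ (fst pf)) (tens Q ?s ?t)"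
  proof -
    have "valid_term E (PQ (ptgt C pf)) (tens Q s t)" "ttype E (PQ (ptgt C pf)) (tens Q s t) = fst ph"
      using tens_valid[OF c(2) st(1), of t] st(2,4,5) by auto
    from pmor_sem_curr(1)[OF curr_pres_ccomp pf(1) ph(1) this] show ?thesis
      using pf(2) ph(2) by (simp add: apply_path_ccomp tens_extend_right)
  qed
  ultimately show "mu_rep (c_dom cC f) (act_triple f h u) = pmor SPQ f h (mu_rep (c_cod cC f) u)"
    by simp
qed

lemma mu_pmor:
  assumes f: "f \<in> c_mor cC" and h: "h \<in> c_mor cE"
    and X: "X \<in> pobj (prof_comp cC cD cE SP SQ) (c_cod cC f) (c_dom cE h)"
  shows "mu D E P Q (c_dom cC f) (c_cod cE h) (pmor (prof_comp cC cD cE SP SQ) f h X)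
    = pmor SPQ f h (mu D E P Q (c_cod cC f) (c_dom cE h) X)"
    and "pmor (prof_comp cC cD cE SP SQ) f h X \<in> pobj (prof_comp cC cD cE SP SQ) (c_dom cC f) (c_cod cE h)"
proof -
  have c: "c_dom cC f \<in> sorts C" using sem_cat_dom_cod_obj[OF wfC f] by simp
  note u = pobj_prof_comp_rep(1)[OF X]
  show "mu D E P Q (c_dom cC f) (c_cod cE h) (pmor (prof_comp cC cD cE SP SQ) f h X)
    = pmor SPQ f h (mu D E P Q (c_cod cC f) (c_dom cE h) X)"
    unfolding pmor_prof_comp_coend_act mu_coend_class[OF c mu_rep_coend_act(1)[OF f h u]]
    by (simp add: mu_rep_coend_act(2)[OF f h u] mu_eq_mu_rep)
  show "pmor (prof_comp cC cD cE SP SQ) f h X \<in> pobj (prof_comp cC cD cE SP SQ) (c_dom cC f) (c_cod cE h)"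
    unfolding pmor_prof_comp_coend_act pobj_prof_comp using mu_rep_coend_act(1)[OF f h u] by blast
qed

theorem mu_iso: "is_prof_iso cC cE (prof_comp cC cD cE SP SQ) SPQ (mu D E P Q)"
proof (rule is_prof_isoI[where \<beta> = "\<lambda>c e U. mu_inv c e (rep U)"])
  show "is_nt cC cE (prof_comp cC cD cE SP SQ) SPQ (mu D E P Q)"
    unfolding is_nt_def using mu_in_pobj mu_pmor(1) by auto
qed (use mu_inv_in_pobj mu_inv_mu mu_pmor(2) sem_cat_dom_cod_obj[OF wfC] sem_cat_dom_cod_obj[OF wfE] in auto)


lemma pmor_prof_comp_class:
  assumes f: "f \<in> c_mor cC" and h: "h \<in> c_mor cE" and u: "u \<in> K (c_cod cC f) (c_dom cE h)"
  shows "pmor (prof_comp cC cD cE SP SQ) f h (cls (c_cod cC f) (c_dom cE h) u)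
    = cls (c_dom cC f) (c_cod cE h) (act_triple f h u)"
proof -
  have c: "c_dom cC f \<in> sorts C" "c_cod cC f \<in> sorts C" using sem_cat_dom_cod_obj[OF wfC f] by auto
  let ?X = "cls (c_cod cC f) (c_dom cE h) u" and ?Y = "cls (c_dom cC f) (c_cod cE h) (act_triple f h u)"
  have X: "?X \<in> pobj (prof_comp cC cD cE SP SQ) (c_cod cC f) (c_dom cE h)"
    using u unfolding pobj_prof_comp by blast
  have Y: "?Y \<in> pobj (prof_comp cC cD cE SP SQ) (c_dom cC f) (c_cod cE h)"
    using mu_rep_coend_act(1)[OF f h u] unfolding pobj_prof_comp by blast
  have "mu D E P Q (c_dom cC f) (c_cod cE h) (pmor (prof_comp cC cD cE SP SQ) f h ?X)
      = mu D E P Q (c_dom cC f) (c_cod cE h) ?Y"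
    using mu_pmor(1)[OF f h X] mu_coend_class[OF c(2) u] mu_coend_class[OF c(1) mu_rep_coend_act(1)[OF f h u]]
      mu_rep_coend_act(2)[OF f h u]
    by simp
  then show ?thesis using mu_inv_mu[OF c(1) mu_pmor(2)[OF f h X]] mu_inv_mu[OF c(1) Y] by metis
qed

lemma finite_curr_ccomp:
  assumes "finite_curr C D P" "finite_curr D E Q"
  shows "finite_curr C E (ccomp D E P Q)"
  unfolding finite_curr_def finite_inspres_def
proof (intro conjI ballI)
  show "finite_catpres C" "finite_catpres E" using assms by (auto simp: finite_curr_def)
  fix c assume c: "c \<in> sorts C"
  have fP: "finite (gens (cinst P c))" "finite (ieqs (cinst P c))"
    using assms c by (auto simp: finite_curr_def finite_inspres_def)
  have fQ: "finite (gens (cinst Q d))" "finite (ieqs (cinst Q d))" if "d \<in> sorts D" for d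
    using assms that by (auto simp: finite_curr_def finite_inspres_def)
  have "gens (PQ c) = Sigma (gens (cinst P c)) (\<lambda>x. gens (cinst Q (gsort (cinst P c) x)))"
    by (auto simp: ccomp_gens)
  then show "finite (gens (PQ c))" using fP fQ gsortP[OF c] by (auto intro: finite_SigmaI)
  let ?L = "Sigma (ieqs (cinst P c)) (\<lambda>ss. gens (cinst Q (ttype D (cinst P c) (fst ss))))"
    and ?R = "Sigma (gens (cinst P c)) (\<lambda>x. ieqs (cinst Q (gsort (cinst P c) x)))"
  have "ieqs (PQ c) \<subseteq> (\<lambda>(ss, q). (tens Q (fst ss) (q, []), tens Q (snd ss) (q, []))) ` ?L
      \<union> (\<lambda>(x, tt). (tens Q (x, []) (fst tt), tens Q (x, []) (snd tt))) ` ?R"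
  proof
    fix ww assume "ww \<in> ieqs (PQ c)"
    moreover obtain w w' where ww: "ww = (w, w')" by (rule prod.exhaust)
    ultimately have "(w, w') \<in> ieqs (PQ c)" by simp
    then show "ww \<in> (\<lambda>(ss, q). (tens Q (fst ss) (q, []), tens Q (snd ss) (q, []))) ` ?L
      \<union> (\<lambda>(x, tt). (tens Q (x, []) (fst tt), tens Q (x, []) (snd tt))) ` ?R"
    proof (cases rule: ccomp_ieqsE)
      case (left s s' q)
      then show ?thesis using ww by (intro UnI1 image_eqI[of _ _ "((s, s'), q)"]) auto
    next
      case (right x t t')
      then show ?thesis using ww by (intro UnI2 image_eqI[of _ _ "(x, (t, t'))"]) auto
    qed
  qed
  moreover have "finite ?L"
  proof (intro finite_SigmaI fP(2))
    fix ss assume "ss \<in> ieqs (cinst P c)"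
    then have "valid_term D (cinst P c) (fst ss)" using wfP[OF c] by (auto simp: wf_inspres_def)
    then show "finite (gens (cinst Q (ttype D (cinst P c) (fst ss))))" using fQ ttypeP[OF c] by blast
  qed
  moreover have "finite ?R" using fP fQ gsortP[OF c] by (auto intro: finite_SigmaI)
  ultimately show "finite (ieqs (PQ c))" by (auto intro: finite_subset)
qed

end

section \<open>Naturality in the presentations\<close>

lemma curr_morph_apply_path:
  assumes cQ: "curr_pres D E Q" and cQ': "curr_pres D E Q'" and \<psi>: "curr_morph D E Q Q' \<psi>"
  shows "d \<in> sorts D \<Longrightarrow> path_ok D d g \<Longrightarrow> valid_term E (cinst Q (ptgt D (d, g))) t \<Longrightarrow>
    teq E (cinst Q' d) (tapp (\<psi> d) (apply_path Q g t)) (apply_path Q' g (tapp (\<psi> (ptgt D (d, g))) t))"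
proof (induction g arbitrary: d)
  case Nil
  then have "inst_morph E (cinst Q d) (cinst Q' d) (\<psi> d)" using \<psi> by (auto simp: curr_morph_def)
  then show ?case using inst_morph_valid Nil by (fastforce intro: teq_refl)
next
  case (Cons f g)
  then have f: "f \<in> syms D" "sdom D f = d" "path_ok D (scod D f) g" by auto
  note sf = curr_pres_sym[OF cQ f(1)] and sf' = curr_pres_sym[OF cQ' f(1)]
  let ?d = "scod D f" and ?w = "apply_path Q g t"
  have vw: "valid_term E (cinst Q ?d) ?w" using apply_path_valid[OF cQ sf(2) f(3)] Cons(4) by simp
  have m: "inst_morph E (cinst Q d) (cinst Q' d) (\<psi> d)" "inst_morph E (cinst Q ?d) (cinst Q' ?d) (\<psi> ?d)"
    using \<psi> Cons(2) sf(2) by (auto simp: curr_morph_def)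
  have "morph_eq E (cinst Q ?d) (cinst Q' d) (mcomp (\<psi> d) (cmor Q f)) (mcomp (cmor Q' f) (\<psi> ?d))"
    using \<psi> f by (auto simp: curr_morph_def)
  then have "teq E (cinst Q' d) (tapp (mcomp (\<psi> d) (cmor Q f)) ?w) (tapp (mcomp (cmor Q' f) (\<psi> ?d)) ?w)"
    using morph_eq_teq[OF _ _ vw] mcomp_valid[OF sf(3) m(1)[folded f(2)]] f(2) by blast
  then have "teq E (cinst Q' d) (tapp (\<psi> d) (tapp (cmor Q f) ?w)) (tapp (cmor Q' f) (tapp (\<psi> ?d) ?w))"
    by (simp add: tapp_tapp)
  also have "teq E (cinst Q' d) (tapp (cmor Q' f) (tapp (\<psi> ?d) ?w))
      (tapp (cmor Q' f) (apply_path Q' g (tapp (\<psi> (ptgt D (?d, g))) t)))"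
    using inst_morph_teq[OF curr_pres_wf(2)[OF cQ'] curr_pres_wf(3)[OF cQ' sf(2)] sf'(3)]
      Cons.IH[OF sf(2) f(3)] Cons(4) f(2)
    by simp
  finally show ?case by simp
qed

locale composable_curr_morph = composable_curr C D E P Q + tgt: composable_curr C D E P' Q'
  for C :: "('c,'f) catpres" and D :: "('d,'g) catpres" and E :: "('e,'h) catpres"
    and P :: "('c,'f,'x,'d,'g) curr" and Q :: "('d,'g,'y,'e,'h) curr"
    and P' :: "('c,'f,'x2,'d,'g) curr" and Q' :: "('d,'g,'y2,'e,'h) curr" +
  fixes \<phi> :: "'c \<Rightarrow> 'x \<Rightarrow> 'x2 \<times> 'g list" and \<psi> :: "'d \<Rightarrow> 'y \<Rightarrow> 'y2 \<times> 'h list"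
  assumes \<phi>: "curr_morph C D P P' \<phi>" and \<psi>: "curr_morph D E Q Q' \<psi>"
begin

abbreviation "\<Phi> c \<equiv> ccomp_morph P Q' \<phi> \<psi> c"

lemma inst_morph_\<phi>: "c \<in> sorts C \<Longrightarrow> inst_morph D (cinst P c) (cinst P' c) (\<phi> c)"
  using \<phi> by (auto simp: curr_morph_def)

lemma inst_morph_\<psi>: "d \<in> sorts D \<Longrightarrow> inst_morph E (cinst Q d) (cinst Q' d) (\<psi> d)"
  using \<psi> by (auto simp: curr_morph_def)

lemma ccomp_morph_tens:
  assumes c: "c \<in> sorts C" and vs: "valid_term D (cinst P c) s"
    and vt: "valid_term E (cinst Q (ttype D (cinst P c) s)) t"
  shows "teq E (tgt.PQ c) (tapp (\<Phi> c) (tens Q s t)) (tens Q' (tapp (\<phi> c) s) (tapp (\<psi> (ttype D (cinst P c) s)) t))"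
proof -
  obtain x g where s: "s = (x, g)" by fastforce
  let ?d = "gsort (cinst P c) x" and ?u = "apply_path Q g t" and ?t = "tapp (\<psi> (ttype D (cinst P c) s)) t"
  have x: "x \<in> gens (cinst P c)" "path_ok D ?d g" "?d \<in> sorts D"
    using vs s by (auto simp: valid_term_def valid_path_def)
  have "tapp (\<Phi> c) (tens Q s t) = tens Q' (\<phi> c x) (tapp (\<psi> ?d) ?u)"
    using s tens_extend_right[of Q' "\<phi> c x" "(fst (\<psi> ?d (fst ?u)), snd (\<psi> ?d (fst ?u)))" "snd ?u"]
    by (simp add: tens_def Let_def tapp_def ccomp_morph_def)
  moreover have "valid_term D (cinst P' c) (\<phi> c x)" "ttype D (cinst P' c) (\<phi> c x) = ?d"
    using inst_morph_\<phi>[OF c] x(1) by (auto simp: inst_morph_def)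
  moreover have "teq E (cinst Q' ?d) (tapp (\<psi> ?d) ?u) (apply_path Q' g ?t)"
    using curr_morph_apply_path[OF cpQ tgt.cpQ \<psi> x(3) x(2)] vt s by (simp add: ttype_def)
  ultimately have "teq E (tgt.PQ c) (tapp (\<Phi> c) (tens Q s t)) (tens Q' (\<phi> c x) (apply_path Q' g ?t))"
    using tgt.tens_teq_right[OF c] by simp
  also have "tens Q' (\<phi> c x) (apply_path Q' g ?t) = tens Q' (tapp (\<phi> c) s) ?t"
    using s tens_extend_left[of Q' "\<phi> c x" g] by (simp add: tapp_def)
  finally show ?thesis .
qed

lemma ccomp_morph_ieq:
  assumes c: "c \<in> sorts C" and ww: "(w, w') \<in> ieqs (PQ c)"
  shows "teq E (tgt.PQ c) (tapp (\<Phi> c) w) (tapp (\<Phi> c) w')"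
  using ww
proof (cases rule: ccomp_ieqsE)
  case (left s s' q)
  then have v: "valid_term D (cinst P c) s" "valid_term D (cinst P c) s'"
    "ttype D (cinst P c) s = ttype D (cinst P c) s'"
    using wfP[OF c] by (auto simp: wf_inspres_def)
  let ?d = "ttype D (cinst P c) s"
  have d: "?d \<in> sorts D" using ttypeP[OF c v(1)] .
  have vq: "valid_term E (cinst Q ?d) (q, [])" using valid_genQ[OF d] left by blast
  have "teq E (tgt.PQ c) (tapp (\<Phi> c) w) (tens Q' (tapp (\<phi> c) s) (tapp (\<psi> ?d) (q, [])))"
    using ccomp_morph_tens[OF c v(1) vq] left by simp
  also have "teq E (tgt.PQ c) \<dots> (tens Q' (tapp (\<phi> c) s') (tapp (\<psi> ?d) (q, [])))"
  proof -
    have "teq D (cinst P' c) (tapp (\<phi> c) s) (tapp (\<phi> c) s')"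
      using inst_morph_\<phi>[OF c] left(3) by (auto simp: inst_morph_def)
    then show ?thesis
      using tgt.tens_teq_left[OF c] inst_morph_valid[OF inst_morph_\<psi>[OF d] vq]
        inst_morph_valid[OF inst_morph_\<phi>[OF c] v(1)]
      by simp
  qed
  also have "teq E (tgt.PQ c) \<dots> (tapp (\<Phi> c) w')"
    using teq_sym[OF ccomp_morph_tens[OF c v(2)]] vq v(3) left by simp
  finally show ?thesis .
next
  case (right x t t')
  let ?d = "gsort (cinst P c) x"
  have d: "?d \<in> sorts D" using gsortP[OF c right(3)] .
  have vx: "valid_term D (cinst P c) (x, [])" using valid_genP[OF c right(3)] .
  have vt: "valid_term E (cinst Q ?d) t" "valid_term E (cinst Q ?d) t'"
    using wfQ[OF d] right by (auto simp: wf_inspres_def)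
  have "teq E (tgt.PQ c) (tapp (\<Phi> c) w) (tens Q' (tapp (\<phi> c) (x, [])) (tapp (\<psi> ?d) t))"
    using ccomp_morph_tens[OF c vx] vt right by simp
  also have "teq E (tgt.PQ c) \<dots> (tens Q' (tapp (\<phi> c) (x, [])) (tapp (\<psi> ?d) t'))"
  proof -
    have "teq E (cinst Q' ?d) (tapp (\<psi> ?d) t) (tapp (\<psi> ?d) t')"
      using inst_morph_\<psi>[OF d] right(4) by (auto simp: inst_morph_def)
    then show ?thesis
      using tgt.tens_teq_right[OF c conjunct1[OF inst_morph_valid[OF inst_morph_\<phi>[OF c] vx]]]
        inst_morph_valid[OF inst_morph_\<phi>[OF c] vx]
      by simp
  qed
  also have "teq E (tgt.PQ c) \<dots> (tapp (\<Phi> c) w')"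
    using teq_sym[OF ccomp_morph_tens[OF c vx]] vt right by simp
  finally show ?thesis .
qed

lemma inst_morph_ccomp_morph:
  assumes c: "c \<in> sorts C"
  shows "inst_morph E (PQ c) (tgt.PQ c) (\<Phi> c)"
proof (rule inst_morphI)
  fix w assume "w \<in> gens (PQ c)"
  then obtain x q where w: "w = (x, q)" "x \<in> gens (cinst P c)" "q \<in> gens (cinst Q (gsort (cinst P c) x))"
    by (auto simp: ccomp_gens)
  let ?d = "gsort (cinst P c) x"
  have "valid_term D (cinst P' c) (\<phi> c x)" "ttype D (cinst P' c) (\<phi> c x) = ?d"
    using inst_morph_\<phi>[OF c] w by (auto simp: inst_morph_def)
  moreover have "valid_term E (cinst Q' ?d) (\<psi> ?d q)" "ttype E (cinst Q' ?d) (\<psi> ?d q) = gsort (cinst Q ?d) q"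
    using inst_morph_\<psi>[OF gsortP[OF c w(2)]] w by (auto simp: inst_morph_def)
  ultimately show "valid_term E (tgt.PQ c) (\<Phi> c w) \<and> ttype E (tgt.PQ c) (\<Phi> c w) = gsort (PQ c) w"
    using tgt.tens_valid[OF c] w by (auto simp: ccomp_morph_def)
qed (rule ccomp_morph_ieq[OF c])

lemma sem_curr_morph_tens:
  assumes c: "c \<in> sorts C" and vs: "valid_term D (cinst P c) s"
    and vt: "valid_term E (cinst Q (ttype D (cinst P c) s)) t"
  shows "sem_curr_morph E (ccomp D E P' Q') (ccomp_morph P Q' \<phi> \<psi>) c e (tclass E (PQ c) (tens Q s t))
    = tclass E (tgt.PQ c) (tens Q' (tapp (\<phi> c) s) (tapp (\<psi> (ttype D (cinst P c) s)) t))"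
proof -
  have vw: "valid_term E (PQ c) (tens Q s t)" using tens_valid[OF c vs vt] by simp
  have "teq E (tgt.PQ c) (tapp (\<Phi> c) (rep (tclass E (PQ c) (tens Q s t)))) (tapp (\<Phi> c) (tens Q s t))"
    using inst_morph_teq[OF wfE wf_inspres_ccomp[OF c] inst_morph_ccomp_morph[OF c] teq_rep_tclass[OF vw]] .
  also have "teq E (tgt.PQ c) \<dots> (tens Q' (tapp (\<phi> c) s) (tapp (\<psi> (ttype D (cinst P c) s)) t))"
    using ccomp_morph_tens[OF c vs vt] .
  finally show ?thesis unfolding sem_curr_morph_def by (rule tclass_eq)
qed

lemma mu_prof_comp_nt_classes:
  assumes c: "c \<in> sorts C" and vs: "valid_term D (cinst P c) s"
    and vt: "valid_term E (cinst Q (ttype D (cinst P c) s)) t" "ttype E (cinst Q (ttype D (cinst P c) s)) t = e"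
    and X: "rep X = (ttype D (cinst P c) s, tclass D (cinst P c) s, tclass E (cinst Q (ttype D (cinst P c) s)) t)"
  shows "mu D E P' Q' c e (prof_comp_nt cC cD cE (sem_curr C D P') (sem_curr D E Q')
      (sem_curr_morph D P' \<phi>) (sem_curr_morph E Q' \<psi>) c e X)
    = tclass E (tgt.PQ c) (tens Q' (tapp (\<phi> c) s) (tapp (\<psi> (ttype D (cinst P c) s)) t))"
proof -
  let ?d = "ttype D (cinst P c) s"
  have d: "?d \<in> sorts D" using ttypeP[OF c vs] .
  let ?s = "rep (tclass D (cinst P c) s)" and ?t = "rep (tclass E (cinst Q ?d) t)"
  have vs': "valid_term D (cinst P c) ?s" "ttype D (cinst P c) ?s = ?d"
    using rep_tclass[OF wfD wfP[OF c] vs] by auto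
  have vt': "valid_term E (cinst Q ?d) ?t" "ttype E (cinst Q ?d) ?t = e"
    using rep_tclass[OF wfE wfQ[OF d] vt(1)] vt(2) by auto
  note ms = inst_morph_valid[OF inst_morph_\<phi>[OF c]] and mt = inst_morph_valid[OF inst_morph_\<psi>[OF d]]
  have eq: "ttype D (cinst P' c) (tapp (\<phi> c) ?s) = ?d" "ttype E (cinst Q' ?d) (tapp (\<psi> ?d) ?t) = e"
    using ms[OF vs'(1)] vs'(2) mt[OF vt'(1)] vt'(2) by auto
  have nt: "prof_comp_nt cC cD cE (sem_curr C D P') (sem_curr D E Q')
      (sem_curr_morph D P' \<phi>) (sem_curr_morph E Q' \<psi>) c e X
    = tgt.cls c e (?d, tclass D (cinst P' c) (tapp (\<phi> c) ?s), tclass E (cinst Q' ?d) (tapp (\<psi> ?d) ?t))"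
    unfolding prof_comp_nt_def X by (simp add: sem_curr_morph_def)
  have "valid_term E (cinst Q' (ttype D (cinst P' c) (tapp (\<phi> c) ?s))) (tapp (\<psi> ?d) ?t)"
    using mt[OF vt'(1)] eq(1) by simp
  note target = tgt.mu_class[OF c conjunct1[OF ms[OF vs'(1)]] this, unfolded eq]
  have "teq E (tgt.PQ c) (tens Q' (tapp (\<phi> c) ?s) (tapp (\<psi> ?d) ?t)) (tens Q' (tapp (\<phi> c) s) (tapp (\<psi> ?d) ?t))"
    using tgt.tens_teq_left[OF c inst_morph_teq[OF wfD wfP[OF c] inst_morph_\<phi>[OF c] teq_rep_tclass[OF vs]]]
      ms[OF vs'(1)] mt[OF vt'(1)] vs'(2)
    by simp
  also have "teq E (tgt.PQ c) \<dots> (tens Q' (tapp (\<phi> c) s) (tapp (\<psi> ?d) t))"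
    using tgt.tens_teq_right[OF c conjunct1[OF ms[OF vs]]] conjunct2[OF ms[OF vs]]
      inst_morph_teq[OF wfE wfQ[OF d] inst_morph_\<psi>[OF d] teq_rep_tclass[OF vt(1)]]
    by simp
  finally show ?thesis using nt target by (simp add: tclass_eq)
qed

lemma mu_natural:
  assumes c: "c \<in> sorts C" and X: "X \<in> pobj (prof_comp cC cD cE SP SQ) c e"
  shows "sem_curr_morph E (ccomp D E P' Q') (ccomp_morph P Q' \<phi> \<psi>) c e (mu D E P Q c e X)
    = mu D E P' Q' c e (prof_comp_nt cC cD cE (sem_curr C D P') (sem_curr D E Q')
        (sem_curr_morph D P' \<phi>) (sem_curr_morph E Q' \<psi>) c e X)"
proof -
  obtain s t where st: "valid_term D (cinst P c) s" "valid_term E (cinst Q (ttype D (cinst P c) s)) t"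
    "ttype E (cinst Q (ttype D (cinst P c) s)) t = e"
    "rep X = (ttype D (cinst P c) s, tclass D (cinst P c) s, tclass E (cinst Q (ttype D (cinst P c) s)) t)"
    "mu D E P Q c e X = tclass E (PQ c) (tens Q s t)"
    using pobj_prof_compE[OF c X] by metis
  then show ?thesis using sem_curr_morph_tens[OF c st(1,2)] mu_prof_comp_nt_classes[OF c st(1-4)] by simp
qed

end


section \<open>Finitely curried presentable profunctors\<close>

lemma fcp_prof_comp:
  fixes C :: "('c,'f) catpres" and D :: "('d,'g) catpres" and E :: "('e,'h) catpres"
    and PP :: "('c, ('c \<times> 'f list) set, 'd, ('d \<times> 'g list) set, 'v) prof"
    and QQ :: "('d, ('d \<times> 'g list) set, 'e, ('e \<times> 'h list) set, 'w) prof"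
  assumes "is_prof (sem_cat C) (sem_cat D) PP" "is_prof (sem_cat D) (sem_cat E) QQ"
    and "fcp TYPE('x) C D PP" "fcp TYPE('y) D E QQ"
  shows "fcp TYPE('x \<times> 'y) C E (prof_comp (sem_cat C) (sem_cat D) (sem_cat E) PP QQ)"
proof -
  obtain P :: "('c,'f,'x,'d,'g) curr" and \<alpha> where P: "curr_pres C D P" "finite_curr C D P"
    "is_prof_iso (sem_cat C) (sem_cat D) PP (sem_curr C D P) \<alpha>"
    using assms(3) unfolding fcp_def prof_isomorphic_def by blast
  obtain Q :: "('d,'g,'y,'e,'h) curr" and \<beta> where Q: "curr_pres D E Q" "finite_curr D E Q"
    "is_prof_iso (sem_cat D) (sem_cat E) QQ (sem_curr D E Q) \<beta>"
    using assms(4) unfolding fcp_def prof_isomorphic_def by blast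
  interpret composable_curr C D E P Q using P Q by unfold_locales
  have "is_prof_iso cC cE (prof_comp cC cD cE PP QQ) (prof_comp cC cD cE SP SQ) (prof_comp_nt cC cD cE SP SQ \<alpha> \<beta>)"
    using prof_comp_nt_iso[OF wfC wfD wfE assms(1,2) P(3) Q(3) pmor_prof_comp_class] .
  then have "prof_isomorphic cC cE (prof_comp cC cD cE PP QQ) SPQ"
    unfolding prof_isomorphic_def
    using is_prof_iso_trans[OF _ mu_iso sem_cat_dom_cod_obj[OF wfC] sem_cat_dom_cod_obj[OF wfE]] by blast
  then show ?thesis
    using curr_pres_ccomp finite_curr_ccomp[OF P(2) Q(2)] unfolding fcp_def by blast
qed

theorem mainTheorem10:
  fixes C :: "('c,'f) catpres" and D :: "('d,'g) catpres" and E :: "('e,'h) catpres"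
    and P :: "('c,'f,'x,'d,'g) curr" and Q :: "('d,'g,'y,'e,'h) curr"
  assumes "wf_catpres C" and "wf_catpres D" and "wf_catpres E"
  shows
   "(curr_pres C D P \<and> curr_pres D E Q \<longrightarrow>
       is_prof_iso (sem_cat C) (sem_cat E)
          (prof_comp (sem_cat C) (sem_cat D) (sem_cat E) (sem_curr C D P) (sem_curr D E Q))
          (sem_curr C E (ccomp D E P Q)) (mu D E P Q)
     \<and> (\<forall>c\<in>sorts C. \<forall>s t. valid_term D (cinst P c) s \<longrightarrow>
          valid_term E (cinst Q (ttype D (cinst P c) s)) t \<longrightarrow>
          mu D E P Q c (ttype E (cinst Q (ttype D (cinst P c) s)) t)
            (coend_class (sem_cat C) (sem_cat D) (sem_cat E) (sem_curr C D P) (sem_curr D E Q)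
               c (ttype E (cinst Q (ttype D (cinst P c) s)) t)
               (ttype D (cinst P c) s, tclass D (cinst P c) s,
                tclass E (cinst Q (ttype D (cinst P c) s)) t))
          = tclass E (cinst (ccomp D E P Q) c) (tens Q s t))
     \<and> (\<forall>(P' :: ('c,'f,'x2,'d,'g) curr) (Q' :: ('d,'g,'y2,'e,'h) curr) \<phi> \<psi>.
          curr_pres C D P' \<longrightarrow> curr_pres D E Q' \<longrightarrow>
          curr_morph C D P P' \<phi> \<longrightarrow> curr_morph D E Q Q' \<psi> \<longrightarrow>
          (\<forall>c\<in>sorts C. \<forall>e\<in>sorts E.
             \<forall>X\<in>pobj (prof_comp (sem_cat C) (sem_cat D) (sem_cat E) (sem_curr C D P) (sem_curr D E Q)) c e.
               sem_curr_morph E (ccomp D E P' Q') (ccomp_morph P Q' \<phi> \<psi>) c e (mu D E P Q c e X)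
               = mu D E P' Q' c e
                   (prof_comp_nt (sem_cat C) (sem_cat D) (sem_cat E) (sem_curr C D P') (sem_curr D E Q')
                      (sem_curr_morph D P' \<phi>) (sem_curr_morph E Q' \<psi>) c e X)))
     \<and> (finite_curr C D P \<and> finite_curr D E Q \<longrightarrow> finite_curr C E (ccomp D E P Q)))
    \<and> (\<forall>(PP :: ('c, ('c \<times> 'f list) set, 'd, ('d \<times> 'g list) set, 'v) prof)
         (QQ :: ('d, ('d \<times> 'g list) set, 'e, ('e \<times> 'h list) set, 'w) prof).
         is_prof (sem_cat C) (sem_cat D) PP \<longrightarrow> is_prof (sem_cat D) (sem_cat E) QQ \<longrightarrow>
         fcp TYPE('x) C D PP \<longrightarrow> fcp TYPE('y) D E QQ \<longrightarrow>
         fcp TYPE('x \<times> 'y) C E (prof_comp (sem_cat C) (sem_cat D) (sem_cat E) PP QQ))"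
    (is "(?pres \<longrightarrow> ?iso \<and> ?on_classes \<and> ?natural \<and> (?finite \<longrightarrow> ?finite_comp)) \<and> ?fcp")
proof (intro conjI impI)
  assume ?pres
  then interpret composable_curr C D E P Q by unfold_locales auto
  show ?iso by (rule mu_iso)
  show ?on_classes using mu_class by blast
  show ?natural
  proof (intro allI impI ballI)
    fix P' :: "('c,'f,'x2,'d,'g) curr" and Q' :: "('d,'g,'y2,'e,'h) curr" and \<phi> \<psi> c e X
    assume "curr_pres C D P'" "curr_pres D E Q'" "curr_morph C D P P' \<phi>" "curr_morph D E Q Q' \<psi>"
    then interpret composable_curr_morph C D E P Q P' Q' \<phi> \<psi> by unfold_locales
    assume "c \<in> sorts C" "X \<in> pobj (prof_comp cC cD cE SP SQ) c e"
    then show "sem_curr_morph E (ccomp D E P' Q') (ccomp_morph P Q' \<phi> \<psi>) c e (mu D E P Q c e X)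
      = mu D E P' Q' c e (prof_comp_nt cC cD cE (sem_curr C D P') (sem_curr D E Q')
          (sem_curr_morph D P' \<phi>) (sem_curr_morph E Q' \<psi>) c e X)"
      by (rule mu_natural)
  qed
  assume ?finite
  then show ?finite_comp using finite_curr_ccomp by blast
next
  show ?fcp using fcp_prof_comp by blast
qed

end
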